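(* Let $n\ge 2$, $\gamma\in\{0,1\}$, $0<\alpha<1$. Let $C_{i,k}>0$ ($0\le i\le n$, $0\le k\le n$, $i+k\le n$) be fixed positive numbers (weights). Let $f_1,\dots,f_{n-1}>0$ and $\sigma_1,\dots,\sigma_{n-1}>0$ be arbitrary (unknown) parameters, and put $f_n=1$, $\sigma_n=0$. Randomness: let $\boldsymbol{\zeta}_{i,k}$ ($0\le i\le n-k$, $1\le k\le n-1$) and $\boldsymbol{\zeta}_{i,n-i+1}$ ($1\le i\le n$) be i.i.d. standard normal random variables; write $\boldsymbol{\mathcal R}=\{\boldsymbol\zeta_{i,k}: 0\le i\le n-k,\ 1\le k\le n-1\}$ (the residues of the observed triangle). Define the observed factors $\boldsymbol F_{i,k}=f_k+\sigma_k C_{i,k-1}^{-\gamma/2}\boldsymbol\zeta_{i,k}$ and the estimates, for $k=1,\dots,n-1$, $$\hat{\boldsymbol f}_k=\frac{\sum_{i=0}^{n-k}C_{i,k-1}^\gamma \boldsymbol F_{i,k}}{\sum_{i=0}^{n-k}C_{i,k-1}^\gamma},\qquad \hat{\boldsymbol\sigma}_k^2=\frac{1}{n-k}\sum_{i=0}^{n-k}C_{i,k-1}^\gamma(\boldsymbol F_{i,k}-\hat{\boldsymbol f}_k)^2,$$ and $\hat f_n=1$, $\hat\sigma_n=0$. The true next-year payments are $\boldsymbol Z_{i,n-i+1}=\bigl(f_{n-i+1}+\sigma_{n-i+1}C_{i,n-i}^{-\gamma/2}\boldsymbol\zeta_{i,n-i+1}-1\bigr)C_{i,n-i}$ for $1\le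 i\le n$. Modelled quantities: for a fixed realization $\mathcal R$ of $\boldsymbol{\mathcal R}$ (hence fixed $\hat f_k,\hat\sigma_k$), let $\boldsymbol\zeta'_{i,k}$ ($0\le i\le n-k$, $1\le k\le n-1$) and $\boldsymbol\zeta'_{i,n-i+1}$ ($1\le i\le n$) be i.i.d. standard normal, independent of everything above. For $k=1,\dots,n-1$ set $$\boldsymbol R'_k=\sum_{i=0}^{n-k}\boldsymbol\zeta'_{i,k}\frac{\sqrt{C_{i,k-1}^\gamma}}{\sum_{h=0}^{n-k}C_{h,k-1}^\gamma},\qquad \boldsymbol M'_k=\frac{1}{n-k}\sum_{i=0}^{n-k}C_{i,k-1}^\gamma\Bigl(\frac{\boldsymbol\zeta'_{i,k}}{\sqrt{C_{i,k-1}^\gamma}}-\boldsymbol R'_k\Bigr)^2,$$ $(\boldsymbol\sigma_k^{sim})^2=\hat\sigma_k^2/\boldsymbol M'_k$, $\boldsymbol f_k^{sim}=\hat f_k-\boldsymbol\sigma_k^{sim}\boldsymbol R'_k$, and $\boldsymbol f_n^{sim}=1$, $\boldsymbol\sigma_n^{sim}=0$. For $1\le i\le n$ let $\boldsymbol Z^{model}_{i,n-i+1}=\bigl(\boldsymbol f^{sim}_{n-i+1}+\boldsymbol\sigma^{sim}_{n-i+1}C_{i,n-i}^{-\gamma/2}\boldsymbol\zeta'_{i,n-i+1}-1\bigr)C_{i,n-i}$ and $\hat Z_{i,n-i+1}=(\hat f_{n-i+1}-1)C_{i,n-i}$. With $v_{i}=C_{i,n-i}^2\bigl(C_{i,n-i}^{-\gamma}+(\sum_{l=0}^{i-1}C_{l,n-i}^\gamma)^{-1}\bigr)$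 define for $2\le i\le n$ $$w_{n-i+1}=\frac{\sigma_{n-i+1}^2v_i}{\sum_{j=2}^n\sigma_{n-j+1}^2v_j},\qquad \hat w_{n-i+1}=\frac{\hat\sigma_{n-i+1}^2v_i}{\sum_{j=2}^n\hat\sigma_{n-j+1}^2v_j},$$ $$\boldsymbol a_{sim}=\Bigl(\sum_{i=2}^n\frac{\hat w_{n-i+1}}{\boldsymbol M'_{n-i+1}}\cdot\sum_{i=2}^n w_{n-i+1}\boldsymbol M'_{n-i+1}\Bigr)^{-1/2},$$ and $\boldsymbol Z^{model}_{adj}(\mathcal R)=\sum_{i=1}^n\bigl[(1-\boldsymbol a_{sim})\hat Z_{i,n-i+1}+\boldsymbol a_{sim}\boldsymbol Z^{model}_{i,n-i+1}\bigr]$. Let $\mathrm{SCR}_{\boldsymbol Z}(\alpha;\mathcal R)$ denote the $\alpha$-quantile of the distribution of $\boldsymbol Z^{model}_{adj}(\mathcal R)$ (for fixed $\mathcal R$). Then, regardless of the values of the parameters $f_k,\sigma_k$, $$P\Bigl(\sum_{i=1}^n\boldsymbol Z_{i,n-i+1}\le \mathrm{SCR}_{\boldsymbol Z}(\alpha;\boldsymbol{\mathcal R})\Bigr)=\alpha,$$ where the probability is taken over $\boldsymbol{\mathcal R}$ and the $\boldsymbol\zeta_{i,n-i+1}$.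
   Context: This is the normal chain-ladder model for a claims development triangle: $C_{i,k}$ are cumulative claims of accident year $i$ up to development year $k$, observed for $i+k\le n$; all claims are settled after $n$ development years ($f_n=1$, $\sigma_n=0$, so $\boldsymbol Z_{1,n}=0$). The weights $C_{i,k}$ are treated as fixed, only the residues are random. The variable $\sum_i\boldsymbol Z_{i,n-i+1}$ is the true payment of the next calendar year, and $\boldsymbol Z^{model}_{adj}$ is the payment modelled by an adjusted fiducial ("inversion") method with stochastic correction factor $\boldsymbol a_{sim}$. *)

theory Defs
  imports "HOL-Probability.Probability"
begin

definition std_normal_measure :: "real measure" where
  "std_normal_measure = density lborel std_normal_density"

text \<open>Index set of all residues: the observed triangle
  (0 \<le> i \<le> n-k, 1 \<le> k \<le> n-1) and the next calendar diagonal (i, n-i+1), 1 \<le> i \<le> n.\<close>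
definition idx :: "nat \<Rightarrow> (nat \<times> nat) set" where
  "idx n = {(i,k). 1 \<le> k \<and> k \<le> n - 1 \<and> i \<le> n - k} \<union> {(i,k). 1 \<le> i \<and> i \<le> n \<and> k = n - i + 1}"

definition resid_space :: "nat \<Rightarrow> (nat \<times> nat \<Rightarrow> real) measure" where
  "resid_space n = (\<Pi>\<^sub>M ik\<in>idx n. std_normal_measure)"

definition quantile :: "'a measure \<Rightarrow> ('a \<Rightarrow> real) \<Rightarrow> real \<Rightarrow> real" where
  "quantile M X a = Inf {x. a \<le> measure M {\<omega> \<in> space M. X \<omega> \<le> x}}"

definition Fobs :: "(nat \<Rightarrow> nat \<Rightarrow> real) \<Rightarrow> real \<Rightarrow> (nat \<Rightarrow> real) \<Rightarrow> (nat \<Rightarrow> real)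
    \<Rightarrow> (nat \<times> nat \<Rightarrow> real) \<Rightarrow> nat \<Rightarrow> nat \<Rightarrow> real" where
  "Fobs C \<gamma> f \<sigma> \<zeta> i k = f k + \<sigma> k * C i (k - 1) powr (- \<gamma> / 2) * \<zeta> (i, k)"

definition fhat :: "nat \<Rightarrow> (nat \<Rightarrow> nat \<Rightarrow> real) \<Rightarrow> real \<Rightarrow> (nat \<Rightarrow> real) \<Rightarrow> (nat \<Rightarrow> real)
    \<Rightarrow> (nat \<times> nat \<Rightarrow> real) \<Rightarrow> nat \<Rightarrow> real" where
  "fhat n C \<gamma> f \<sigma> \<zeta> k = (if k = n then 1 else
     (\<Sum>i=0..n-k. C i (k - 1) powr \<gamma> * Fobs C \<gamma> f \<sigma> \<zeta> i k) / (\<Sum>i=0..n-k. C i (k - 1) powr \<gamma>))"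

definition sighat :: "nat \<Rightarrow> (nat \<Rightarrow> nat \<Rightarrow> real) \<Rightarrow> real \<Rightarrow> (nat \<Rightarrow> real) \<Rightarrow> (nat \<Rightarrow> real)
    \<Rightarrow> (nat \<times> nat \<Rightarrow> real) \<Rightarrow> nat \<Rightarrow> real" where
  "sighat n C \<gamma> f \<sigma> \<zeta> k = (if k = n then 0 else
     sqrt (1 / real (n - k) * (\<Sum>i=0..n-k. C i (k - 1) powr \<gamma> *
        (Fobs C \<gamma> f \<sigma> \<zeta> i k - fhat n C \<gamma> f \<sigma> \<zeta> k)\<^sup>2)))"

definition Ztrue :: "nat \<Rightarrow> (nat \<Rightarrow> nat \<Rightarrow> real) \<Rightarrow> real \<Rightarrow> (nat \<Rightarrow> real) \<Rightarrow> (nat \<Rightarrow> real)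
    \<Rightarrow> (nat \<times> nat \<Rightarrow> real) \<Rightarrow> nat \<Rightarrow> real" where
  "Ztrue n C \<gamma> f \<sigma> \<zeta> i = (f (n - i + 1) + \<sigma> (n - i + 1) * C i (n - i) powr (- \<gamma> / 2)
      * \<zeta> (i, n - i + 1) - 1) * C i (n - i)"

definition Rp :: "nat \<Rightarrow> (nat \<Rightarrow> nat \<Rightarrow> real) \<Rightarrow> real \<Rightarrow> (nat \<times> nat \<Rightarrow> real) \<Rightarrow> nat \<Rightarrow> real" where
  "Rp n C \<gamma> \<zeta>' k = (\<Sum>i=0..n-k. \<zeta>' (i, k) * sqrt (C i (k - 1) powr \<gamma>)
      / (\<Sum>h=0..n-k. C h (k - 1) powr \<gamma>))"

definition Mp :: "nat \<Rightarrow> (nat \<Rightarrow> nat \<Rightarrow> real) \<Rightarrow> real \<Rightarrow> (nat \<times> nat \<Rightarrow> real) \<Rightarrow> nat \<Rightarrow> real" where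
  "Mp n C \<gamma> \<zeta>' k = 1 / real (n - k) * (\<Sum>i=0..n-k. C i (k - 1) powr \<gamma> *
      (\<zeta>' (i, k) / sqrt (C i (k - 1) powr \<gamma>) - Rp n C \<gamma> \<zeta>' k)\<^sup>2)"

definition sigsim :: "nat \<Rightarrow> (nat \<Rightarrow> nat \<Rightarrow> real) \<Rightarrow> real \<Rightarrow> (nat \<Rightarrow> real) \<Rightarrow> (nat \<Rightarrow> real)
    \<Rightarrow> (nat \<times> nat \<Rightarrow> real) \<Rightarrow> (nat \<times> nat \<Rightarrow> real) \<Rightarrow> nat \<Rightarrow> real" where
  "sigsim n C \<gamma> f \<sigma> \<zeta> \<zeta>' k = (if k = n then 0 else
      sqrt ((sighat n C \<gamma> f \<sigma> \<zeta> k)\<^sup>2 / Mp n C \<gamma> \<zeta>' k))"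

definition fsim :: "nat \<Rightarrow> (nat \<Rightarrow> nat \<Rightarrow> real) \<Rightarrow> real \<Rightarrow> (nat \<Rightarrow> real) \<Rightarrow> (nat \<Rightarrow> real)
    \<Rightarrow> (nat \<times> nat \<Rightarrow> real) \<Rightarrow> (nat \<times> nat \<Rightarrow> real) \<Rightarrow> nat \<Rightarrow> real" where
  "fsim n C \<gamma> f \<sigma> \<zeta> \<zeta>' k = (if k = n then 1 else
      fhat n C \<gamma> f \<sigma> \<zeta> k - sigsim n C \<gamma> f \<sigma> \<zeta> \<zeta>' k * Rp n C \<gamma> \<zeta>' k)"

definition Zmodel :: "nat \<Rightarrow> (nat \<Rightarrow> nat \<Rightarrow> real) \<Rightarrow> real \<Rightarrow> (nat \<Rightarrow> real) \<Rightarrow> (nat \<Rightarrow> real)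
    \<Rightarrow> (nat \<times> nat \<Rightarrow> real) \<Rightarrow> (nat \<times> nat \<Rightarrow> real) \<Rightarrow> nat \<Rightarrow> real" where
  "Zmodel n C \<gamma> f \<sigma> \<zeta> \<zeta>' i = (fsim n C \<gamma> f \<sigma> \<zeta> \<zeta>' (n - i + 1)
      + sigsim n C \<gamma> f \<sigma> \<zeta> \<zeta>' (n - i + 1) * C i (n - i) powr (- \<gamma> / 2) * \<zeta>' (i, n - i + 1) - 1)
      * C i (n - i)"

definition Zhat :: "nat \<Rightarrow> (nat \<Rightarrow> nat \<Rightarrow> real) \<Rightarrow> real \<Rightarrow> (nat \<Rightarrow> real) \<Rightarrow> (nat \<Rightarrow> real)
    \<Rightarrow> (nat \<times> nat \<Rightarrow> real) \<Rightarrow> nat \<Rightarrow> real" where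
  "Zhat n C \<gamma> f \<sigma> \<zeta> i = (fhat n C \<gamma> f \<sigma> \<zeta> (n - i + 1) - 1) * C i (n - i)"

definition vv :: "nat \<Rightarrow> (nat \<Rightarrow> nat \<Rightarrow> real) \<Rightarrow> real \<Rightarrow> nat \<Rightarrow> real" where
  "vv n C \<gamma> i = (C i (n - i))\<^sup>2 * (C i (n - i) powr (- \<gamma>)
      + 1 / (\<Sum>l=0..i-1. C l (n - i) powr \<gamma>))"

text \<open>Weights w_{n-i+1} (indexed here by i), for a given volatility function s.\<close>
definition ww :: "nat \<Rightarrow> (nat \<Rightarrow> nat \<Rightarrow> real) \<Rightarrow> real \<Rightarrow> (nat \<Rightarrow> real) \<Rightarrow> nat \<Rightarrow> real" where
  "ww n C \<gamma> s i = (s (n - i + 1))\<^sup>2 * vv n C \<gamma> i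
      / (\<Sum>j=2..n. (s (n - j + 1))\<^sup>2 * vv n C \<gamma> j)"

definition asim :: "nat \<Rightarrow> (nat \<Rightarrow> nat \<Rightarrow> real) \<Rightarrow> real \<Rightarrow> (nat \<Rightarrow> real) \<Rightarrow> (nat \<Rightarrow> real)
    \<Rightarrow> (nat \<times> nat \<Rightarrow> real) \<Rightarrow> (nat \<times> nat \<Rightarrow> real) \<Rightarrow> real" where
  "asim n C \<gamma> f \<sigma> \<zeta> \<zeta>' =
     ((\<Sum>i=2..n. ww n C \<gamma> (sighat n C \<gamma> f \<sigma> \<zeta>) i / Mp n C \<gamma> \<zeta>' (n - i + 1))
      * (\<Sum>i=2..n. ww n C \<gamma> \<sigma> i * Mp n C \<gamma> \<zeta>' (n - i + 1))) powr (- 1 / 2)"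

definition Zadj :: "nat \<Rightarrow> (nat \<Rightarrow> nat \<Rightarrow> real) \<Rightarrow> real \<Rightarrow> (nat \<Rightarrow> real) \<Rightarrow> (nat \<Rightarrow> real)
    \<Rightarrow> (nat \<times> nat \<Rightarrow> real) \<Rightarrow> (nat \<times> nat \<Rightarrow> real) \<Rightarrow> real" where
  "Zadj n C \<gamma> f \<sigma> \<zeta> \<zeta>' = (\<Sum>i=1..n.
      (1 - asim n C \<gamma> f \<sigma> \<zeta> \<zeta>') * Zhat n C \<gamma> f \<sigma> \<zeta> i
      + asim n C \<gamma> f \<sigma> \<zeta> \<zeta>' * Zmodel n C \<gamma> f \<sigma> \<zeta> \<zeta>' i)"

text \<open>SCR_Z(alpha; R): alpha-quantile of Zadj(R) over the fresh residues zeta'.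
  It depends on zeta only through the observed residues R.\<close>
definition SCR :: "nat \<Rightarrow> (nat \<Rightarrow> nat \<Rightarrow> real) \<Rightarrow> real \<Rightarrow> (nat \<Rightarrow> real) \<Rightarrow> (nat \<Rightarrow> real)
    \<Rightarrow> real \<Rightarrow> (nat \<times> nat \<Rightarrow> real) \<Rightarrow> real" where
  "SCR n C \<gamma> f \<sigma> \<alpha> \<zeta> = quantile (resid_space n) (\<lambda>\<zeta>'. Zadj n C \<gamma> f \<sigma> \<zeta> \<zeta>') \<alpha>"

end

theory Submission
  imports Defs
begin

text \<open>In each development column \<open>k\<close>, rotate the residues by an orthogonal map sending the unit
  vector proportional to \<open>(\<surd>(C i (k - 1) powr \<gamma>))\<^sub>i\<close> to one coordinate. The standard Gaussian
  product measure is invariant, and afterwards the projection of the column, which drives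
  \<open>fhat\<close>, and its residual part, which drives \<open>sighat\<close>, occupy disjoint coordinates. Both the true
  payment and the adjusted model payment are then \<open>\<Sum> Zhat\<close> plus a centred Gaussian linear form
  whose variance depends only on residual mean squares, and the factor \<open>a_sim\<close> makes the two
  studentized deviations equal in law: a normal scale mixture not involving \<open>f\<close> or \<open>\<sigma>\<close>. Hence
  \<open>SCR\<close> is \<open>\<Sum> Zhat\<close> plus the \<open>\<alpha>\<close>-quantile of this pivot times the estimated scale, and the
  coverage is exactly \<open>\<alpha>\<close>.\<close>

section \<open>Rotation invariance of the standard normal product measure\<close>

lemma sets_std_normal [simp, measurable_cong]: "sets std_normal_measure = sets borel"
  by (simp add: std_normal_measure_def)

lemma space_std_normal [simp]: "space std_normal_measure = UNIV"
  by (simp add: std_normal_measure_def)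

lemma prob_space_std_normal: "prob_space std_normal_measure"
  unfolding std_normal_measure_def by (rule prob_space_normal_density) simp

interpretation std_normal: real_distribution std_normal_measure
  by (simp add: real_distribution_def real_distribution_axioms_def prob_space_std_normal)

lemma nn_integral_std_normal:
  "g \<in> borel_measurable borel \<Longrightarrow>
    (\<integral>\<^sup>+x. g x \<partial>std_normal_measure) = (\<integral>\<^sup>+x. ennreal (std_normal_density x) * g x \<partial>lborel)"
  unfolding std_normal_measure_def by (simp add: nn_integral_density)

lemma emeasure_std_normal_singleton: "emeasure std_normal_measure {x} = 0"
proof -
  have "emeasure std_normal_measure {x} = (\<integral>\<^sup>+y. ennreal (std_normal_density y) * indicator {x} y \<partial>lborel)"
    unfolding std_normal_measure_def by (simp add: emeasure_density)
  also have "\<dots> = 0"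
    by (rule nn_integral_0_iff_AE[THEN iffD2]) (auto intro: AE_mp[OF AE_lborel_singleton[of x]])
  finally show ?thesis .
qed

abbreviation Phi :: "real \<Rightarrow> real" where
  "Phi \<equiv> cdf std_normal_measure"

lemma Phi_bounds [simp]: "0 \<le> Phi x" "Phi x \<le> 1" "\<bar>Phi x\<bar> \<le> 1"
  using std_normal.cdf_nonneg[of x] std_normal.cdf_bounded_prob[of x] by auto

lemma isCont_Phi: "isCont Phi x"
  using emeasure_std_normal_singleton by (simp add: std_normal.isCont_cdf measure_def)

lemma Phi_measurable [measurable]: "Phi \<in> borel_measurable borel"
  by (rule borel_measurable_mono) (simp add: mono_def std_normal.cdf_nondecreasing)

text \<open>Proved by the one-dimensional affine substitution rule in each variable, whence \<open>s \<noteq> 0\<close>.\<close>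
lemma lborel_pair_orthogonal_invariant:
  fixes s t :: real and K :: "real \<Rightarrow> real \<Rightarrow> ennreal"
  assumes s: "s \<noteq> 0" and st: "s\<^sup>2 + t\<^sup>2 = 1"
    and K[measurable]: "case_prod K \<in> borel_measurable (borel \<Otimes>\<^sub>M borel)"
  shows "(\<integral>\<^sup>+y. \<integral>\<^sup>+z. K (s*z + t*y) (t*z - s*y) \<partial>lborel \<partial>lborel)
       = (\<integral>\<^sup>+y. \<integral>\<^sup>+z. K z y \<partial>lborel \<partial>lborel)"
proof -
  have inner_z: "(\<integral>\<^sup>+w. K w ((t*w - y)/s) \<partial>lborel)
      = ennreal \<bar>s\<bar> * (\<integral>\<^sup>+z. K (s*z + t*y) (t*z - s*y) \<partial>lborel)" for y
  proof -
    have "(\<integral>\<^sup>+w. K w ((t*w - y)/s) \<partial>lborel)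
        = ennreal \<bar>s\<bar> * (\<integral>\<^sup>+z. K (t*y + s*z) ((t*(t*y + s*z) - y)/s) \<partial>lborel)"
      by (rule nn_integral_real_affine[OF _ s]) measurable
    also have "(\<lambda>z. K (t*y + s*z) ((t*(t*y + s*z) - y)/s)) = (\<lambda>z. K (s*z + t*y) (t*z - s*y))"
    proof
      fix z
      have "s*(s*y) + t*(t*y) = y" using st by (metis distrib_right mult.assoc mult_1 power2_eq_square)
      then have "t*(t*y + s*z) - y = s * (t*z - s*y)" by (simp add: algebra_simps)
      then show "K (t*y + s*z) ((t*(t*y + s*z) - y)/s) = K (s*z + t*y) (t*z - s*y)"
        using s by (simp add: add.commute)
    qed
    finally show ?thesis .
  qed
  have inner_y: "(\<integral>\<^sup>+y. K w ((t*w - y)/s) \<partial>lborel) = ennreal \<bar>s\<bar> * (\<integral>\<^sup>+v. K w v \<partial>lborel)" for w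
  proof -
    have "(\<integral>\<^sup>+v. K w v \<partial>lborel) = ennreal \<bar>-1/s\<bar> * (\<integral>\<^sup>+y. K w (t*w/s + (-1/s)*y) \<partial>lborel)"
      by (rule nn_integral_real_affine) (use s in auto)
    also have "(\<lambda>y. K w (t*w/s + (-1/s)*y)) = (\<lambda>y. K w ((t*w - y)/s))"
      by (simp add: diff_divide_distrib)
    finally have "ennreal \<bar>s\<bar> * (\<integral>\<^sup>+v. K w v \<partial>lborel)
        = ennreal \<bar>s\<bar> * ennreal \<bar>-1/s\<bar> * (\<integral>\<^sup>+y. K w ((t*w - y)/s) \<partial>lborel)"
      by (simp add: mult.assoc)
    also have "ennreal \<bar>s\<bar> * ennreal \<bar>-1/s\<bar> = 1"
      using s by (simp add: ennreal_mult'[symmetric] abs_mult[symmetric])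
    finally show ?thesis by simp
  qed
  have "ennreal \<bar>s\<bar> * (\<integral>\<^sup>+y. \<integral>\<^sup>+z. K (s*z + t*y) (t*z - s*y) \<partial>lborel \<partial>lborel)
      = (\<integral>\<^sup>+y. ennreal \<bar>s\<bar> * \<integral>\<^sup>+z. K (s*z + t*y) (t*z - s*y) \<partial>lborel \<partial>lborel)"
    by (rule nn_integral_cmult[symmetric]) measurable
  also have "\<dots> = (\<integral>\<^sup>+y. \<integral>\<^sup>+w. K w ((t*w - y)/s) \<partial>lborel \<partial>lborel)"
    by (simp add: inner_z)
  also have "\<dots> = (\<integral>\<^sup>+w. \<integral>\<^sup>+y. K w ((t*w - y)/s) \<partial>lborel \<partial>lborel)"
    by (rule lborel_pair.Fubini') measurable
  also have "\<dots> = (\<integral>\<^sup>+w. ennreal \<bar>s\<bar> * \<integral>\<^sup>+v. K w v \<partial>lborel \<partial>lborel)"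
    by (simp add: inner_y)
  also have "\<dots> = ennreal \<bar>s\<bar> * (\<integral>\<^sup>+w. \<integral>\<^sup>+v. K w v \<partial>lborel \<partial>lborel)"
    by (rule nn_integral_cmult) measurable
  also have "(\<integral>\<^sup>+w. \<integral>\<^sup>+v. K w v \<partial>lborel \<partial>lborel) = (\<integral>\<^sup>+y. \<integral>\<^sup>+z. K z y \<partial>lborel \<partial>lborel)"
    by (rule lborel_pair.Fubini'[symmetric]) measurable
  finally show ?thesis
    using s by (simp add: ennreal_mult_cancel_left)
qed

lemma std_normal_pair_orthogonal_invariant:
  fixes s t :: real and h :: "real \<Rightarrow> real \<Rightarrow> ennreal"
  assumes s: "s \<noteq> 0" and st: "s\<^sup>2 + t\<^sup>2 = 1"
    and h[measurable]: "case_prod h \<in> borel_measurable (borel \<Otimes>\<^sub>M borel)"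
  shows "(\<integral>\<^sup>+y. \<integral>\<^sup>+z. h (s*z + t*y) (t*z - s*y) \<partial>std_normal_measure \<partial>std_normal_measure)
       = (\<integral>\<^sup>+y. \<integral>\<^sup>+z. h z y \<partial>std_normal_measure \<partial>std_normal_measure)"
proof -
  define K where "K a b = ennreal (std_normal_density a) * ennreal (std_normal_density b) * h a b" for a b
  have [measurable]: "case_prod K \<in> borel_measurable (borel \<Otimes>\<^sub>M borel)"
    unfolding K_def by measurable
  have density_invariant: "ennreal (std_normal_density y) * ennreal (std_normal_density z)
      = ennreal (std_normal_density (s*z + t*y)) * ennreal (std_normal_density (t*z - s*y))" for y z
  proof -
    have "(s*z + t*y)\<^sup>2 + (t*z - s*y)\<^sup>2 = (s\<^sup>2 + t\<^sup>2) * (z\<^sup>2 + y\<^sup>2)"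
      by (simp add: algebra_simps power2_eq_square)
    then have "(s*z + t*y)\<^sup>2 + (t*z - s*y)\<^sup>2 = z\<^sup>2 + y\<^sup>2"
      using st by simp
    then have "std_normal_density y * std_normal_density z
       = std_normal_density (s*z + t*y) * std_normal_density (t*z - s*y)"
      unfolding std_normal_density_def by (simp add: exp_add[symmetric] field_simps)
    then show ?thesis by (simp add: ennreal_mult'[symmetric])
  qed
  have to_lborel: "(\<integral>\<^sup>+y. \<integral>\<^sup>+z. g z y \<partial>std_normal_measure \<partial>std_normal_measure)
      = (\<integral>\<^sup>+y. \<integral>\<^sup>+z. ennreal (std_normal_density y) * ennreal (std_normal_density z) * g z y
           \<partial>lborel \<partial>lborel)"
    if [measurable]: "case_prod g \<in> borel_measurable (borel \<Otimes>\<^sub>M borel)" for g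
    by (subst nn_integral_std_normal, measurable, rule nn_integral_cong,
        subst nn_integral_std_normal, measurable, subst nn_integral_cmult[symmetric], measurable)
       (simp add: mult.assoc)
  have "(\<integral>\<^sup>+y. \<integral>\<^sup>+z. h (s*z + t*y) (t*z - s*y) \<partial>std_normal_measure \<partial>std_normal_measure)
      = (\<integral>\<^sup>+y. \<integral>\<^sup>+z. K (s*z + t*y) (t*z - s*y) \<partial>lborel \<partial>lborel)"
    by (subst to_lborel, measurable, intro nn_integral_cong, subst density_invariant)
       (simp add: K_def mult.assoc)
  also have "\<dots> = (\<integral>\<^sup>+y. \<integral>\<^sup>+z. K z y \<partial>lborel \<partial>lborel)"
    by (rule lborel_pair_orthogonal_invariant[OF s st]) measurable
  also have "\<dots> = (\<integral>\<^sup>+y. \<integral>\<^sup>+z. h z y \<partial>std_normal_measure \<partial>std_normal_measure)"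
    by (subst to_lborel) (simp_all add: K_def mult_ac)
  finally show ?thesis .
qed


abbreviation std_normal_PiM :: "'i set \<Rightarrow> ('i \<Rightarrow> real) measure" where
  "std_normal_PiM I \<equiv> \<Pi>\<^sub>M i\<in>I. std_normal_measure"

interpretation std_normal_product: product_sigma_finite "\<lambda>_. std_normal_measure"
  by (simp add: product_sigma_finite_def std_normal.sigma_finite_measure_axioms)

lemma prob_space_std_normal_PiM: "prob_space (std_normal_PiM I)"
  by (rule prob_space_PiM) (simp add: prob_space_std_normal)

interpretation std_normal_PiM: prob_space "std_normal_PiM I" for I
  by (rule prob_space_std_normal_PiM)

lemma measurable_component_std_normal_PiM [measurable]:
  "(\<lambda>\<eta>. \<eta> x) \<in> borel_measurable (std_normal_PiM I)"
proof (cases "x \<in> I")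
  case False
  show ?thesis
    by (rule measurable_cong[where f="\<lambda>_. undefined", THEN iffD1])
       (use False in \<open>auto simp: space_PiM PiE_def extensional_def\<close>)
qed simp

lemma nn_integral_std_normal_PiM_pair:
  assumes "finite I" "j \<in> I" "l \<in> I" "j \<noteq> l"
    and f[measurable]: "f \<in> borel_measurable (std_normal_PiM I)"
  shows "integral\<^sup>N (std_normal_PiM I) f
       = (\<integral>\<^sup>+x. \<integral>\<^sup>+y. \<integral>\<^sup>+z. f (x(l := y, j := z))
            \<partial>std_normal_measure \<partial>std_normal_measure \<partial>std_normal_PiM (I - {j, l}))"
proof -
  define I' where "I' = I - {j, l}"
  have I: "I = insert j (insert l I')" "j \<notin> insert l I'" "l \<notin> I'" "finite I'"
    using assms by (auto simp: I'_def)
  have f': "f \<in> borel_measurable (std_normal_PiM (insert j (insert l I')))"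
    using f I(1) by simp
  have upd: "(\<lambda>(x, z). x(j := z)) \<in> std_normal_PiM (insert l I') \<Otimes>\<^sub>M std_normal_measure
      \<rightarrow>\<^sub>M std_normal_PiM (insert j (insert l I'))"
  proof (rule measurable_PiM_single')
    fix i assume i: "i \<in> insert j (insert l I')"
    show "(\<lambda>w. (case w of (x, z) \<Rightarrow> x(j := z)) i)
        \<in> std_normal_PiM (insert l I') \<Otimes>\<^sub>M std_normal_measure \<rightarrow>\<^sub>M std_normal_measure"
    proof (cases "i = j")
      case False
      then have "i \<in> insert l I'" using i by auto
      with False show ?thesis by (simp add: case_prod_beta)
    qed (simp add: case_prod_beta)
  qed (auto simp: space_PiM PiE_def extensional_def space_pair_measure)
  have inner: "(\<lambda>x. \<integral>\<^sup>+z. f (x(j := z)) \<partial>std_normal_measure) \<in> borel_measurable (std_normal_PiM (insert l I'))"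
    using measurable_comp[OF upd f']
    by (intro std_normal.borel_measurable_nn_integral) (simp add: comp_def case_prod_beta')
  have "integral\<^sup>N (std_normal_PiM (insert j (insert l I'))) f
      = (\<integral>\<^sup>+x. \<integral>\<^sup>+z. f (x(j := z)) \<partial>std_normal_measure \<partial>std_normal_PiM (insert l I'))"
    using I by (intro std_normal_product.product_nn_integral_insert f') auto
  also have "\<dots> = (\<integral>\<^sup>+x. \<integral>\<^sup>+y. \<integral>\<^sup>+z. f (x(l := y, j := z))
            \<partial>std_normal_measure \<partial>std_normal_measure \<partial>std_normal_PiM I')"
    by (rule std_normal_product.product_nn_integral_insert[OF I(4,3) inner])
  finally show ?thesis
    unfolding I(1)[symmetric] unfolding I'_def .
qed

definition givens :: "'i \<Rightarrow> 'i \<Rightarrow> real \<Rightarrow> real \<Rightarrow> ('i \<Rightarrow> real) \<Rightarrow> 'i \<Rightarrow> real" where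
  "givens j l s t \<zeta> = \<zeta>(j := s * \<zeta> j + t * \<zeta> l, l := t * \<zeta> j - s * \<zeta> l)"

lemma givens_measurable:
  assumes "j \<in> I" "l \<in> I"
  shows "givens j l s t \<in> std_normal_PiM I \<rightarrow>\<^sub>M std_normal_PiM I"
  unfolding givens_def
proof (rule measurable_PiM_single')
  fix i assume "i \<in> I"
  then show "(\<lambda>\<zeta>. (\<zeta>(j := s * \<zeta> j + t * \<zeta> l, l := t * \<zeta> j - s * \<zeta> l)) i)
      \<in> std_normal_PiM I \<rightarrow>\<^sub>M std_normal_measure"
    using assms by (cases "i = j"; cases "i = l") auto
qed (use assms in \<open>auto simp: space_PiM PiE_def extensional_def\<close>)

lemma nn_integral_givens:
  assumes "finite I" "j \<in> I" "l \<in> I" "j \<noteq> l" "s \<noteq> 0" "s\<^sup>2 + t\<^sup>2 = 1"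
    and g[measurable]: "g \<in> borel_measurable (std_normal_PiM I)"
  shows "(\<integral>\<^sup>+\<zeta>. g (givens j l s t \<zeta>) \<partial>std_normal_PiM I) = integral\<^sup>N (std_normal_PiM I) g"
proof -
  have g_givens: "(\<lambda>\<zeta>. g (givens j l s t \<zeta>)) \<in> borel_measurable (std_normal_PiM I)"
    using measurable_comp[OF givens_measurable g] assms by (simp add: comp_def)
  have inner: "(\<integral>\<^sup>+y. \<integral>\<^sup>+z. g (givens j l s t (x(l := y, j := z))) \<partial>std_normal_measure \<partial>std_normal_measure)
      = (\<integral>\<^sup>+y. \<integral>\<^sup>+z. g (x(l := y, j := z)) \<partial>std_normal_measure \<partial>std_normal_measure)"
    if x: "x \<in> space (std_normal_PiM (I - {j, l}))" for x
  proof -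
    have upd2: "(\<lambda>(a, b). x(l := b, j := a)) \<in> borel \<Otimes>\<^sub>M borel \<rightarrow>\<^sub>M std_normal_PiM I"
    proof (rule measurable_PiM_single')
      fix i assume "i \<in> I"
      show "(\<lambda>w. (case w of (a, b) \<Rightarrow> x(l := b, j := a)) i) \<in> borel \<Otimes>\<^sub>M borel \<rightarrow>\<^sub>M std_normal_measure"
        by (cases "i = j"; cases "i = l") (auto simp: case_prod_beta)
    qed (use x assms in \<open>auto simp: space_PiM PiE_def extensional_def\<close>)
    have "case_prod (\<lambda>a b. g (x(l := b, j := a))) \<in> borel_measurable (borel \<Otimes>\<^sub>M borel)"
      using measurable_comp[OF upd2 g] by (simp add: comp_def case_prod_beta')
    note invariant = std_normal_pair_orthogonal_invariant[OF assms(5,6) this]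
    have "givens j l s t (x(l := y, j := z)) = x(l := t*z - s*y, j := s*z + t*y)" for y z
      using assms by (auto simp: givens_def fun_eq_iff)
    then show ?thesis
      using invariant by (simp only:)
  qed
  have "(\<integral>\<^sup>+\<zeta>. g (givens j l s t \<zeta>) \<partial>std_normal_PiM I)
      = (\<integral>\<^sup>+x. \<integral>\<^sup>+y. \<integral>\<^sup>+z. g (givens j l s t (x(l := y, j := z)))
           \<partial>std_normal_measure \<partial>std_normal_measure \<partial>std_normal_PiM (I - {j, l}))"
    by (rule nn_integral_std_normal_PiM_pair[OF assms(1-4) g_givens])
  also have "\<dots> = (\<integral>\<^sup>+x. \<integral>\<^sup>+y. \<integral>\<^sup>+z. g (x(l := y, j := z))
           \<partial>std_normal_measure \<partial>std_normal_measure \<partial>std_normal_PiM (I - {j, l}))"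
    by (rule nn_integral_cong) (rule inner)
  also have "\<dots> = integral\<^sup>N (std_normal_PiM I) g"
    by (rule nn_integral_std_normal_PiM_pair[OF assms(1-4) g, symmetric])
  finally show ?thesis .
qed

definition std_normal_preserving :: "'i set \<Rightarrow> (('i \<Rightarrow> real) \<Rightarrow> 'i \<Rightarrow> real) \<Rightarrow> bool" where
  "std_normal_preserving I \<Psi> \<longleftrightarrow> \<Psi> \<in> std_normal_PiM I \<rightarrow>\<^sub>M std_normal_PiM I \<and>
     distr (std_normal_PiM I) (std_normal_PiM I) \<Psi> = std_normal_PiM I"

lemma std_normal_preserving_id: "std_normal_preserving I (\<lambda>\<zeta>. \<zeta>)"
  by (simp add: std_normal_preserving_def)

lemma std_normal_preserving_comp:
  assumes "std_normal_preserving I \<Phi>" "std_normal_preserving I \<Psi>"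
  shows "std_normal_preserving I (\<lambda>\<zeta>. \<Psi> (\<Phi> \<zeta>))"
proof -
  have \<Phi>: "\<Phi> \<in> std_normal_PiM I \<rightarrow>\<^sub>M std_normal_PiM I" and \<Psi>: "\<Psi> \<in> std_normal_PiM I \<rightarrow>\<^sub>M std_normal_PiM I"
    using assms by (auto simp: std_normal_preserving_def)
  have "distr (std_normal_PiM I) (std_normal_PiM I) (\<lambda>\<zeta>. \<Psi> (\<Phi> \<zeta>))
      = distr (distr (std_normal_PiM I) (std_normal_PiM I) \<Phi>) (std_normal_PiM I) \<Psi>"
    using distr_distr[OF \<Psi> \<Phi>] by (simp add: comp_def)
  then show ?thesis
    using assms measurable_comp[OF \<Phi> \<Psi>] by (simp add: std_normal_preserving_def comp_def)
qed

lemma std_normal_preserving_givens: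
  assumes "finite I" "j \<in> I" "l \<in> I" "j \<noteq> l" "s \<noteq> 0" "s\<^sup>2 + t\<^sup>2 = 1"
  shows "std_normal_preserving I (givens j l s t)"
proof -
  have G: "givens j l s t \<in> std_normal_PiM I \<rightarrow>\<^sub>M std_normal_PiM I"
    using assms by (simp add: givens_measurable)
  have "emeasure (distr (std_normal_PiM I) (std_normal_PiM I) (givens j l s t)) A = emeasure (std_normal_PiM I) A"
    if A: "A \<in> sets (std_normal_PiM I)" for A
  proof -
    have "emeasure (distr (std_normal_PiM I) (std_normal_PiM I) (givens j l s t)) A
        = (\<integral>\<^sup>+\<zeta>. indicator A \<zeta> \<partial>distr (std_normal_PiM I) (std_normal_PiM I) (givens j l s t))"
      using A by (intro nn_integral_indicator[symmetric]) simp
    also have "\<dots> = (\<integral>\<^sup>+\<zeta>. indicator A (givens j l s t \<zeta>) \<partial>std_normal_PiM I)"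
      using A by (intro nn_integral_distr[OF G]) simp
    also have "\<dots> = (\<integral>\<^sup>+\<zeta>. indicator A \<zeta> \<partial>std_normal_PiM I)"
      using A by (intro nn_integral_givens[OF assms]) simp
    also have "\<dots> = emeasure (std_normal_PiM I) A"
      by (rule nn_integral_indicator[OF A])
    finally show ?thesis .
  qed
  then show ?thesis
    using G by (auto simp: std_normal_preserving_def intro: measure_eqI)
qed


lemma std_normal_preserving_measure:
  assumes \<Psi>: "std_normal_preserving I \<Psi>"
    and Q: "{\<eta>\<in>space (std_normal_PiM I). Q \<eta>} \<in> sets (std_normal_PiM I)"
  shows "{\<zeta>\<in>space (std_normal_PiM I). Q (\<Psi> \<zeta>)} \<in> sets (std_normal_PiM I)"
    and "measure (std_normal_PiM I) {\<zeta>\<in>space (std_normal_PiM I). Q (\<Psi> \<zeta>)}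
       = measure (std_normal_PiM I) {\<eta>\<in>space (std_normal_PiM I). Q \<eta>}"
proof -
  have M: "\<Psi> \<in> std_normal_PiM I \<rightarrow>\<^sub>M std_normal_PiM I"
    and D: "distr (std_normal_PiM I) (std_normal_PiM I) \<Psi> = std_normal_PiM I"
    using \<Psi> by (auto simp: std_normal_preserving_def)
  have preimage: "\<Psi> -` {\<eta>\<in>space (std_normal_PiM I). Q \<eta>} \<inter> space (std_normal_PiM I)
      = {\<zeta>\<in>space (std_normal_PiM I). Q (\<Psi> \<zeta>)}"
    using measurable_space[OF M] by auto
  show "{\<zeta>\<in>space (std_normal_PiM I). Q (\<Psi> \<zeta>)} \<in> sets (std_normal_PiM I)"
    using measurable_sets[OF M Q] preimage by simp
  show "measure (std_normal_PiM I) {\<zeta>\<in>space (std_normal_PiM I). Q (\<Psi> \<zeta>)}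
      = measure (std_normal_PiM I) {\<eta>\<in>space (std_normal_PiM I). Q \<eta>}"
    using measure_distr[OF M Q] D preimage by simp
qed

lemma std_normal_preserving_AE:
  assumes \<Psi>: "std_normal_preserving I \<Psi>"
    and P: "{\<eta>\<in>space (std_normal_PiM I). P \<eta>} \<in> sets (std_normal_PiM I)"
    and "AE \<eta> in std_normal_PiM I. P \<eta>"
  shows "AE \<zeta> in std_normal_PiM I. P (\<Psi> \<zeta>)"
proof -
  have M: "\<Psi> \<in> std_normal_PiM I \<rightarrow>\<^sub>M std_normal_PiM I"
    and D: "distr (std_normal_PiM I) (std_normal_PiM I) \<Psi> = std_normal_PiM I"
    using \<Psi> by (auto simp: std_normal_preserving_def)
  show ?thesis
    using AE_distr_iff[OF M P] assms(3) unfolding D by blast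
qed

lemma AE_std_normal_PiM_component_nonzero:
  assumes "j \<in> I"
  shows "AE \<eta> in std_normal_PiM I. \<eta> j \<noteq> 0"
proof (rule AE_PiM_component[OF _ assms])
  show "AE x in std_normal_measure. x \<noteq> 0"
    by (rule AE_I[where N="{0}"]) (auto simp: emeasure_std_normal_singleton)
qed (simp add: prob_space_std_normal)

lemma measure_std_normal_PiM_component_le:
  assumes "j \<in> I"
  shows "measure (std_normal_PiM I) {\<eta>\<in>space (std_normal_PiM I). \<eta> j \<le> c} = Phi c"
proof -
  have "{\<eta>\<in>space (std_normal_PiM I). \<eta> j \<le> c} = (\<lambda>\<eta>. \<eta> j) -` {..c} \<inter> space (std_normal_PiM I)"
    by auto
  then show ?thesis
    using measure_distr[of "\<lambda>\<eta>. \<eta> j" "std_normal_PiM I" std_normal_measure "{..c}"]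
      distr_PiM_component[of I "\<lambda>_. std_normal_measure" j] assms
    by (simp add: prob_space_std_normal cdf_def)
qed

definition rotates_column :: "'i set \<Rightarrow> 'i \<Rightarrow> ('i \<Rightarrow> real) \<Rightarrow> (('i \<Rightarrow> real) \<Rightarrow> 'i \<Rightarrow> real) \<Rightarrow> bool" where
  "rotates_column J j0 \<beta> \<Psi> \<longleftrightarrow>
     (\<forall>\<zeta>. \<Psi> \<zeta> j0 = (\<Sum>i\<in>J. \<beta> i * \<zeta> i) / sqrt (\<Sum>i\<in>J. (\<beta> i)\<^sup>2)) \<and>
     (\<forall>\<zeta>. (\<Sum>i\<in>J. (\<Psi> \<zeta> i)\<^sup>2) = (\<Sum>i\<in>J. (\<zeta> i)\<^sup>2))"

lemma rotates_column_singleton: "0 < \<beta> j0 \<Longrightarrow> rotates_column {j0} j0 \<beta> (\<lambda>\<zeta>. \<zeta>)"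
  by (simp add: rotates_column_def)

lemma rotates_column_insert:
  fixes \<beta> :: "'i \<Rightarrow> real"
  assumes "finite J" "j0 \<in> J" "0 < \<beta> j0" "l \<notin> J"
    and \<Psi>: "rotates_column J j0 \<beta> \<Psi>" "\<And>\<zeta>. \<Psi> \<zeta> l = \<zeta> l"
  obtains s t where "s \<noteq> 0" "s\<^sup>2 + t\<^sup>2 = 1"
    "rotates_column (insert l J) j0 \<beta> (\<lambda>\<zeta>. givens j0 l s t (\<Psi> \<zeta>))"
proof -
  define S where "S = (\<Sum>i\<in>J. (\<beta> i)\<^sup>2)"
  define S' where "S' = S + (\<beta> l)\<^sup>2"
  have "(\<beta> j0)\<^sup>2 \<le> S"
    unfolding S_def by (rule member_le_sum) (use assms in auto)
  then have S: "S > 0" using assms(3) by (smt (verit) zero_less_power2)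
  then have S': "S' > 0" by (simp add: S'_def add_pos_nonneg)
  define s where "s = sqrt S / sqrt S'"
  define t where "t = \<beta> l / sqrt S'"
  have "s\<^sup>2 + t\<^sup>2 = 1"
    using S S' by (simp add: s_def t_def power_divide S'_def add_divide_distrib[symmetric])
  moreover have "s \<noteq> 0" using S S' by (simp add: s_def)
  moreover have "rotates_column (insert l J) j0 \<beta> (\<lambda>\<zeta>. givens j0 l s t (\<Psi> \<zeta>))"
    unfolding rotates_column_def
  proof (intro allI conjI)
    fix \<zeta> :: "'i \<Rightarrow> real"
    have j0l: "j0 \<noteq> l" using assms by auto
    have sums: "(\<Sum>i\<in>insert l J. \<beta> i * \<zeta> i) = (\<Sum>i\<in>J. \<beta> i * \<zeta> i) + \<beta> l * \<zeta> l"
      "(\<Sum>i\<in>insert l J. (\<beta> i)\<^sup>2) = S'"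
      using assms by (simp_all add: S'_def S_def)
    show "givens j0 l s t (\<Psi> \<zeta>) j0 = (\<Sum>i\<in>insert l J. \<beta> i * \<zeta> i) / sqrt (\<Sum>i\<in>insert l J. (\<beta> i)\<^sup>2)"
      unfolding sums using \<Psi> j0l S S'
      by (simp add: givens_def rotates_column_def s_def t_def S_def[symmetric] field_simps)
    have rotated: "(givens j0 l s t (\<Psi> \<zeta>) j0)\<^sup>2 + (givens j0 l s t (\<Psi> \<zeta>) l)\<^sup>2 = (\<Psi> \<zeta> j0)\<^sup>2 + (\<Psi> \<zeta> l)\<^sup>2"
    proof -
      have "(givens j0 l s t (\<Psi> \<zeta>) j0)\<^sup>2 + (givens j0 l s t (\<Psi> \<zeta>) l)\<^sup>2
          = (s\<^sup>2 + t\<^sup>2) * ((\<Psi> \<zeta> j0)\<^sup>2 + (\<Psi> \<zeta> l)\<^sup>2)"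
        using j0l by (simp add: givens_def algebra_simps power2_eq_square)
      then show ?thesis using \<open>s\<^sup>2 + t\<^sup>2 = 1\<close> by simp
    qed
    let ?G = "givens j0 l s t (\<Psi> \<zeta>)"
    have rest: "(\<Sum>i\<in>J - {j0}. (?G i)\<^sup>2) = (\<Sum>i\<in>J - {j0}. (\<Psi> \<zeta> i)\<^sup>2)"
      using assms by (intro sum.cong) (auto simp: givens_def)
    have norm: "(\<Sum>i\<in>J. (\<Psi> \<zeta> i)\<^sup>2) = (\<Sum>i\<in>J. (\<zeta> i)\<^sup>2)"
      using \<Psi>(1) by (simp add: rotates_column_def)
    have "(\<Sum>i\<in>insert l J. (?G i)\<^sup>2) = (?G j0)\<^sup>2 + (?G l)\<^sup>2 + (\<Sum>i\<in>J - {j0}. (?G i)\<^sup>2)"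
      using assms by (simp add: sum.remove[of J j0])
    also have "\<dots> = (\<Sum>i\<in>J. (\<Psi> \<zeta> i)\<^sup>2) + (\<zeta> l)\<^sup>2"
      using assms rotated rest \<Psi>(2) by (simp add: sum.remove[of J j0])
    also have "\<dots> = (\<Sum>i\<in>insert l J. (\<zeta> i)\<^sup>2)"
      using assms norm by simp
    finally show "(\<Sum>i\<in>insert l J. (?G i)\<^sup>2) = (\<Sum>i\<in>insert l J. (\<zeta> i)\<^sup>2)" .
  qed
  ultimately show ?thesis using that by blast
qed

lemma rotates_column_fixing_left:
  assumes "rotates_column J j0 \<beta> \<Psi>" "j0 \<in> J" "\<And>\<zeta> x. x \<in> J \<Longrightarrow> \<Phi> \<zeta> x = \<zeta> x"
  shows "rotates_column J j0 \<beta> (\<lambda>\<zeta>. \<Phi> (\<Psi> \<zeta>))"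
  using assms by (simp add: rotates_column_def)

lemma rotates_column_fixing_right:
  assumes "rotates_column J j0 \<beta> \<Psi>" "\<And>\<zeta> x. x \<in> J \<Longrightarrow> \<Phi> \<zeta> x = \<zeta> x"
  shows "rotates_column J j0 \<beta> (\<lambda>\<zeta>. \<Psi> (\<Phi> \<zeta>))"
  using assms by (simp add: rotates_column_def cong: sum.cong)

lemma exists_column_rotation:
  assumes "finite I" "J \<subseteq> I" "j0 \<in> J" "0 < \<beta> j0"
  shows "\<exists>\<Psi>. std_normal_preserving I \<Psi> \<and> (\<forall>\<zeta> x. x \<notin> J \<longrightarrow> \<Psi> \<zeta> x = \<zeta> x) \<and>
    rotates_column J j0 \<beta> \<Psi>"
proof -
  have step: "\<exists>\<Psi>. std_normal_preserving I \<Psi> \<and> (\<forall>\<zeta> x. x \<notin> insert j0 F \<longrightarrow> \<Psi> \<zeta> x = \<zeta> x) \<and>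
      rotates_column (insert j0 F) j0 \<beta> \<Psi>" if "finite F" "F \<subseteq> J - {j0}" for F
    using that
  proof (induction F rule: finite_induct)
    case empty
    then show ?case
      using rotates_column_singleton[of \<beta> j0, OF assms(4)] std_normal_preserving_id by blast
  next
    case (insert l F)
    then obtain \<Psi> where \<Psi>: "std_normal_preserving I \<Psi>" "\<forall>\<zeta> x. x \<notin> insert j0 F \<longrightarrow> \<Psi> \<zeta> x = \<zeta> x"
      "rotates_column (insert j0 F) j0 \<beta> \<Psi>"
      by auto
    have l: "l \<in> I" "l \<noteq> j0" "l \<notin> insert j0 F"
      using insert assms by auto
    obtain s t where st: "s \<noteq> 0" "s\<^sup>2 + t\<^sup>2 = 1"
      and rot: "rotates_column (insert l (insert j0 F)) j0 \<beta> (\<lambda>\<zeta>. givens j0 l s t (\<Psi> \<zeta>))"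
      using rotates_column_insert[of "insert j0 F" j0 \<beta> l \<Psi>] \<Psi> l insert.hyps assms(4) by auto
    have "std_normal_preserving I (\<lambda>\<zeta>. givens j0 l s t (\<Psi> \<zeta>))"
      using assms l st by (intro std_normal_preserving_comp[OF \<Psi>(1)] std_normal_preserving_givens) auto
    moreover have "\<forall>\<zeta> x. x \<notin> insert j0 (insert l F) \<longrightarrow> givens j0 l s t (\<Psi> \<zeta>) x = \<zeta> x"
      using \<Psi>(2) by (auto simp: givens_def)
    ultimately show ?case
      using rot by (intro exI[of _ "\<lambda>\<zeta>. givens j0 l s t (\<Psi> \<zeta>)"]) (simp add: insert_commute)
  qed
  have "finite (J - {j0})"
    using assms finite_subset by auto
  then show ?thesis
    using step[of "J - {j0}"] by (simp add: insert_absorb[OF assms(3)])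
qed

lemma exists_columns_rotation:
  fixes J :: "'k \<Rightarrow> 'i set" and j0 :: "'k \<Rightarrow> 'i" and \<beta> :: "'k \<Rightarrow> 'i \<Rightarrow> real"
  assumes "finite I" "finite K" "disjoint_family_on J K"
    and col: "\<And>k. k \<in> K \<Longrightarrow> J k \<subseteq> I \<and> j0 k \<in> J k \<and> 0 < \<beta> k (j0 k)"
  shows "\<exists>\<Psi>. std_normal_preserving I \<Psi> \<and> (\<forall>\<zeta> x. x \<notin> (\<Union>k\<in>K. J k) \<longrightarrow> \<Psi> \<zeta> x = \<zeta> x) \<and>
    (\<forall>k\<in>K. rotates_column (J k) (j0 k) (\<beta> k) \<Psi>)"
  using assms(2,3) col
proof (induction K rule: finite_induct)
  case empty
  then show ?case using std_normal_preserving_id by blast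
next
  case (insert k K)
  have disj: "J k \<inter> (\<Union>k\<in>K. J k) = {}" "disjoint_family_on J K"
    using insert.prems(1) insert.hyps(2) by (simp_all add: disjoint_family_on_insert)
  obtain \<Psi> where \<Psi>: "std_normal_preserving I \<Psi>" "\<forall>\<zeta> x. x \<notin> (\<Union>k\<in>K. J k) \<longrightarrow> \<Psi> \<zeta> x = \<zeta> x"
    "\<forall>k\<in>K. rotates_column (J k) (j0 k) (\<beta> k) \<Psi>"
    using insert.IH[OF disj(2)] insert.prems(2) by blast
  obtain \<Phi> where \<Phi>: "std_normal_preserving I \<Phi>" "\<forall>\<zeta> x. x \<notin> J k \<longrightarrow> \<Phi> \<zeta> x = \<zeta> x"
    "rotates_column (J k) (j0 k) (\<beta> k) \<Phi>"
    using exists_column_rotation[of I "J k" "j0 k" "\<beta> k", OF assms(1)] insert.prems(2)[of k] by blast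
  have disj: "x \<notin> J k" if "k' \<in> K" "x \<in> J k'" for k' x
    using disj(1) that by blast
  have "rotates_column (J k) (j0 k) (\<beta> k) (\<lambda>\<zeta>. \<Phi> (\<Psi> \<zeta>))"
    by (rule rotates_column_fixing_right[OF \<Phi>(3)]) (use \<Psi>(2) disj in blast)
  moreover have "rotates_column (J k') (j0 k') (\<beta> k') (\<lambda>\<zeta>. \<Phi> (\<Psi> \<zeta>))" if "k' \<in> K" for k'
    by (rule rotates_column_fixing_left[of "J k'"]) (use \<Psi>(3) \<Phi>(2) disj that insert.prems(2) in auto)
  moreover have "std_normal_preserving I (\<lambda>\<zeta>. \<Phi> (\<Psi> \<zeta>))"
    using \<Psi>(1) \<Phi>(1) by (rule std_normal_preserving_comp)
  moreover have "\<forall>\<zeta> x. x \<notin> (\<Union>k\<in>insert k K. J k) \<longrightarrow> \<Phi> (\<Psi> \<zeta>) x = \<zeta> x"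
    using \<Psi>(2) \<Phi>(2) by simp
  ultimately show ?case
    by (intro exI[of _ "\<lambda>\<zeta>. \<Phi> (\<Psi> \<zeta>)"]) blast
qed

section \<open>Linear forms in independent standard normal variables\<close>

lemma measure_std_normal_PiM_linear_le:
  assumes "finite I" "J \<subseteq> I" "j0 \<in> J" "0 < \<beta> j0"
  shows "measure (std_normal_PiM I) {x\<in>space (std_normal_PiM I). (\<Sum>j\<in>J. \<beta> j * x j) \<le> c}
     = Phi (c / sqrt (\<Sum>j\<in>J. (\<beta> j)\<^sup>2))"
proof -
  obtain \<Psi> where \<Psi>: "std_normal_preserving I \<Psi>" "rotates_column J j0 \<beta> \<Psi>"
    using exists_column_rotation[of I J j0 \<beta>, OF assms] by blast
  define B where "B = sqrt (\<Sum>j\<in>J. (\<beta> j)\<^sup>2)"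
  have "(\<beta> j0)\<^sup>2 \<le> (\<Sum>j\<in>J. (\<beta> j)\<^sup>2)"
    using assms finite_subset by (intro member_le_sum) auto
  then have "B > 0"
    using assms(4) unfolding B_def by (smt (verit) real_sqrt_gt_zero zero_less_power2)
  then have event: "(\<Sum>j\<in>J. \<beta> j * x j) \<le> c \<longleftrightarrow> \<Psi> x j0 \<le> c / B" for x
    using \<Psi>(2) by (simp add: rotates_column_def B_def pos_le_divide_eq)
  have "measure (std_normal_PiM I) {x\<in>space (std_normal_PiM I). (\<Sum>j\<in>J. \<beta> j * x j) \<le> c}
      = measure (std_normal_PiM I) {x\<in>space (std_normal_PiM I). \<Psi> x j0 \<le> c / B}"
    by (simp add: event)
  also have "\<dots> = measure (std_normal_PiM I) {\<eta>\<in>space (std_normal_PiM I). \<eta> j0 \<le> c / B}"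
    by (rule std_normal_preserving_measure(2)[OF \<Psi>(1)]) measurable
  also have "\<dots> = Phi (c / B)"
    using assms by (intro measure_std_normal_PiM_component_le) auto
  finally show ?thesis by (simp add: B_def)
qed

text \<open>Fubini over \<open>I = R \<union> N\<close>: for fixed coordinates in \<open>R\<close> the linear form is normal with
  variance \<open>\<Sum>j\<in>J. (a r j)\<^sup>2\<close>.\<close>
lemma measure_std_normal_PiM_linear_le_conditional:
  fixes a :: "('i \<Rightarrow> real) \<Rightarrow> 'i \<Rightarrow> real" and y :: "('i \<Rightarrow> real) \<Rightarrow> real"
  assumes "finite I" "R \<inter> N = {}" "R \<union> N = I" "J \<subseteq> N" "j0 \<in> J"
    and a_meas [measurable]: "\<And>j. (\<lambda>\<eta>. a \<eta> j) \<in> borel_measurable (std_normal_PiM I)"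
      "\<And>j. (\<lambda>r. a r j) \<in> borel_measurable (std_normal_PiM R)"
    and y_meas [measurable]: "y \<in> borel_measurable (std_normal_PiM I)" "y \<in> borel_measurable (std_normal_PiM R)"
    and dep: "\<And>\<eta> \<eta>'. (\<forall>i\<in>R. \<eta> i = \<eta>' i) \<Longrightarrow> a \<eta> = a \<eta>' \<and> y \<eta> = y \<eta>'"
    and pos: "AE r in std_normal_PiM R. 0 < a r j0"
  shows "measure (std_normal_PiM I) {\<eta>\<in>space (std_normal_PiM I). (\<Sum>j\<in>J. a \<eta> j * \<eta> j) \<le> y \<eta>}
     = (\<integral>r. Phi (y r / sqrt (\<Sum>j\<in>J. (a r j)\<^sup>2)) \<partial>std_normal_PiM R)"
proof -
  have fin: "finite N" "finite R" using assms by auto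
  define A where "A = {\<eta>\<in>space (std_normal_PiM I). (\<Sum>j\<in>J. a \<eta> j * \<eta> j) \<le> y \<eta>}"
  have A: "A \<in> sets (std_normal_PiM I)"
    unfolding A_def by measurable
  have "indicator A \<in> borel_measurable (std_normal_PiM (R \<union> N))"
    using A assms(3) by simp
  note fold = std_normal_product.product_nn_integral_fold[OF _ fin(2,1) this]
  have integrable: "integrable (std_normal_PiM R) (\<lambda>r. Phi (y r / sqrt (\<Sum>j\<in>J. (a r j)\<^sup>2)))"
    by (intro std_normal_PiM.integrable_const_bound[where B=1])
       auto
  have nonneg: "0 \<le> (\<integral>r. Phi (y r / sqrt (\<Sum>j\<in>J. (a r j)\<^sup>2)) \<partial>std_normal_PiM R)"
    by simp
  have slice: "(\<integral>\<^sup>+x. indicator A (merge R N (r, x)) \<partial>std_normal_PiM N)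
      = ennreal (Phi (y r / sqrt (\<Sum>j\<in>J. (a r j)\<^sup>2)))"
    if r: "r \<in> space (std_normal_PiM R)" and "0 < a r j0" for r
  proof -
    have ind: "indicator A (merge R N (r, x))
        = indicator {x\<in>space (std_normal_PiM N). (\<Sum>j\<in>J. a r j * x j) \<le> y r} x"
      if x: "x \<in> space (std_normal_PiM N)" for x
    proof -
      have "merge R N (r, x) \<in> space (std_normal_PiM I)"
        using r x assms(3) measurable_space[OF measurable_merge[of R N "\<lambda>_. std_normal_measure"], of "(r, x)"]
        by (simp add: space_pair_measure)
      moreover have "a (merge R N (r, x)) = a r \<and> y (merge R N (r, x)) = y r"
        by (rule dep) (simp add: merge_def)
      moreover have "(\<Sum>j\<in>J. a r j * merge R N (r, x) j) = (\<Sum>j\<in>J. a r j * x j)"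
        using assms(2,4) by (intro sum.cong) (auto simp: merge_def)
      ultimately show ?thesis
        using x by (simp add: A_def split: split_indicator)
    qed
    have "(\<integral>\<^sup>+x. indicator A (merge R N (r, x)) \<partial>std_normal_PiM N)
        = (\<integral>\<^sup>+x. indicator {x\<in>space (std_normal_PiM N). (\<Sum>j\<in>J. a r j * x j) \<le> y r} x \<partial>std_normal_PiM N)"
      by (rule nn_integral_cong) (rule ind)
    also have "\<dots> = emeasure (std_normal_PiM N) {x\<in>space (std_normal_PiM N). (\<Sum>j\<in>J. a r j * x j) \<le> y r}"
      by (rule nn_integral_indicator) measurable
    also have "\<dots> = ennreal (Phi (y r / sqrt (\<Sum>j\<in>J. (a r j)\<^sup>2)))"
      using measure_std_normal_PiM_linear_le[of N J j0 "a r" "y r", OF fin(1) assms(4,5) \<open>0 < a r j0\<close>]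
      by (simp add: std_normal_PiM.emeasure_eq_measure)
    finally show ?thesis .
  qed
  have "emeasure (std_normal_PiM I) A = (\<integral>\<^sup>+\<eta>. indicator A \<eta> \<partial>std_normal_PiM (R \<union> N))"
    using A assms(3) by simp
  also have "\<dots> = (\<integral>\<^sup>+r. \<integral>\<^sup>+x. indicator A (merge R N (r, x)) \<partial>std_normal_PiM N \<partial>std_normal_PiM R)"
    using assms(2) by (intro fold) auto
  also have "\<dots> = (\<integral>\<^sup>+r. ennreal (Phi (y r / sqrt (\<Sum>j\<in>J. (a r j)\<^sup>2))) \<partial>std_normal_PiM R)"
    using pos by (intro nn_integral_cong_AE) (auto simp: slice elim!: AE_mp)
  also have "\<dots> = ennreal (\<integral>r. Phi (y r / sqrt (\<Sum>j\<in>J. (a r j)\<^sup>2)) \<partial>std_normal_PiM R)"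
    by (rule nn_integral_eq_integral[OF integrable]) simp
  finally show ?thesis
    using nonneg unfolding A_def by (simp add: std_normal_PiM.emeasure_eq_measure)
qed

section \<open>Quantiles of normal scale mixtures\<close>

lemma Inf_superlevel_le_iff:
  fixes F :: "real \<Rightarrow> real"
  assumes mono: "mono F" and right_cont: "\<And>x. continuous (at_right x) F"
    and bot: "(F \<longlongrightarrow> 0) at_bot" and top: "(F \<longlongrightarrow> 1) at_top" and a: "0 < a" "a < 1"
  shows "Inf {x. a \<le> F x} \<le> t \<longleftrightarrow> a \<le> F t"
    and "a \<le> F (Inf {x. a \<le> F x})" and "bdd_below {x. a \<le> F x}"
proof -
  let ?S = "{x. a \<le> F x}"
  obtain x0 where "a < F x0"
    using order_tendstoD(1)[OF top a(2)] by (auto simp: eventually_at_top_linorder)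
  then have ne: "?S \<noteq> {}" by (auto intro: less_imp_le)
  obtain b where b: "\<And>x. x \<le> b \<Longrightarrow> F x < a"
    using order_tendstoD(2)[OF bot a(1)] by (auto simp: eventually_at_bot_linorder)
  have "b \<le> x" if "x \<in> ?S" for x
    using b[of x] that by force
  then show bdd: "bdd_below ?S"
    by (rule bdd_belowI)
  show Inf_in: "a \<le> F (Inf ?S)"
  proof (rule tendsto_lowerbound)
    show "(F \<longlongrightarrow> F (Inf ?S)) (at_right (Inf ?S))"
      using right_cont by (simp add: continuous_within)
    show "eventually (\<lambda>x. a \<le> F x) (at_right (Inf ?S))"
    proof (rule eventually_at_rightI[where b="Inf ?S + 1"])
      fix x assume "x \<in> {Inf ?S<..<Inf ?S + 1}"
      then obtain s where "s \<in> ?S" "s < x"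
        using cInf_less_iff[OF ne bdd] by auto
      then show "a \<le> F x"
        using monoD[OF mono, of s x] by simp
    qed simp
  qed simp
  show "Inf ?S \<le> t \<longleftrightarrow> a \<le> F t"
  proof
    assume "Inf ?S \<le> t"
    then show "a \<le> F t"
      using Inf_in monoD[OF mono] order_trans by blast
  next
    assume "a \<le> F t"
    then show "Inf ?S \<le> t"
      by (intro cInf_lower bdd) simp
  qed
qed

lemma Inf_superlevel_continuous:
  fixes F :: "real \<Rightarrow> real"
  assumes mono: "mono F" and cont: "\<And>x. isCont F x"
    and bot: "(F \<longlongrightarrow> 0) at_bot" and top: "(F \<longlongrightarrow> 1) at_top" and a: "0 < a" "a < 1"
  shows "F (Inf {x. a \<le> F x}) = a" and "{x. a \<le> F x} = {Inf {x. a \<le> F x}..}"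
proof -
  let ?S = "{x. a \<le> F x}"
  note superlevel = Inf_superlevel_le_iff[OF mono _ bot top a, OF continuous_at_imp_continuous_within[OF cont]]
  have "F (Inf ?S) \<le> a"
  proof (rule tendsto_upperbound)
    show "(F \<longlongrightarrow> F (Inf ?S)) (at_left (Inf ?S))"
      using cont by (simp add: isCont_def filterlim_at_split)
    show "eventually (\<lambda>x. F x \<le> a) (at_left (Inf ?S))"
    proof (rule eventually_at_leftI[where a="Inf ?S - 1"])
      fix x assume "x \<in> {Inf ?S - 1<..<Inf ?S}"
      then show "F x \<le> a" using superlevel(1)[of x] by auto
    qed simp
  qed simp
  then show "F (Inf ?S) = a" using superlevel(2) by simp
  show "?S = {Inf ?S..}" using superlevel(1) by auto
qed

lemma quantile_le_iff:
  assumes "prob_space M" and X: "X \<in> borel_measurable M" and a: "0 < a" "a < 1"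
  shows "quantile M X a \<le> t \<longleftrightarrow> a \<le> measure M {w\<in>space M. X w \<le> t}"
proof -
  interpret prob_space M by fact
  interpret D: real_distribution "distr M borel X" using X by simp
  have cdf: "cdf (distr M borel X) x = measure M {w\<in>space M. X w \<le> x}" for x
    unfolding cdf_def using X by (subst measure_distr) (auto intro!: arg_cong[where f="measure M"])
  show ?thesis
    using Inf_superlevel_le_iff(1)[OF _ D.cdf_is_right_cont D.cdf_lim_at_bot D.cdf_lim_at_top_prob a]
    by (simp add: quantile_def cdf[symmetric] mono_def D.cdf_nondecreasing)
qed

text \<open>The distribution function of \<open>\<zeta> / g\<close>, for \<open>\<zeta>\<close> standard normal and independent of the
  positive random variable \<open>g\<close>.\<close>
definition normal_scale_mixture :: "'a measure \<Rightarrow> ('a \<Rightarrow> real) \<Rightarrow> real \<Rightarrow> real" where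
  "normal_scale_mixture M g z = (\<integral>r. Phi (z * g r) \<partial>M)"

context
  fixes M :: "'a measure" and g :: "'a \<Rightarrow> real"
  assumes M: "prob_space M" and g[measurable]: "g \<in> borel_measurable M"
    and g_pos: "AE r in M. 0 < g r"
begin

interpretation prob_space M by (rule M)

lemma integrable_Phi_scaled: "integrable M (\<lambda>r. Phi (z * g r))"
  by (rule integrable_const_bound[where B=1]) auto

lemma normal_scale_mixture_mono: "mono (normal_scale_mixture M g)"
proof (rule monoI)
  fix x y :: real assume "x \<le> y"
  have "AE r in M. Phi (x * g r) \<le> Phi (y * g r)"
    using g_pos
    by eventually_elim (use \<open>x \<le> y\<close> in \<open>auto intro!: std_normal.cdf_nondecreasing mult_right_mono\<close>)
  then show "normal_scale_mixture M g x \<le> normal_scale_mixture M g y"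
    unfolding normal_scale_mixture_def by (rule integral_mono_AE[OF integrable_Phi_scaled integrable_Phi_scaled])
qed

lemma isCont_normal_scale_mixture: "isCont (normal_scale_mixture M g) x"
proof (rule continuous_at_sequentiallyI)
  fix u assume u: "u \<longlonglongrightarrow> x"
  show "(\<lambda>n. normal_scale_mixture M g (u n)) \<longlonglongrightarrow> normal_scale_mixture M g x"
    unfolding normal_scale_mixture_def
  proof (rule integral_dominated_convergence[where w="\<lambda>_. 1"])
    show "AE r in M. (\<lambda>n. Phi (u n * g r)) \<longlonglongrightarrow> Phi (x * g r)"
      by (intro AE_I2 isCont_tendsto_compose[OF isCont_Phi] tendsto_intros u)
  qed auto
qed

lemma normal_scale_mixture_at_top: "(normal_scale_mixture M g \<longlongrightarrow> 1) at_top"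
proof -
  have "((\<lambda>z. \<integral>r. Phi (z * g r) \<partial>M) \<longlongrightarrow> (\<integral>r. 1 \<partial>M)) at_top"
  proof (rule integral_dominated_convergence_at_top[where w="\<lambda>_. 1"])
    show "AE r in M. ((\<lambda>z. Phi (z * g r)) \<longlongrightarrow> 1) at_top"
      using g_pos
    proof eventually_elim
      fix r assume "0 < g r"
      then have "LIM z at_top. z * g r :> at_top"
        by (simp add: filterlim_at_top_mult_tendsto_pos[OF tendsto_const] filterlim_ident mult.commute)
      then show "((\<lambda>z. Phi (z * g r)) \<longlongrightarrow> 1) at_top"
        using filterlim_compose[OF std_normal.cdf_lim_at_top_prob] by blast
    qed
  qed auto
  then show ?thesis
    unfolding normal_scale_mixture_def[abs_def] by (simp add: prob_space)
qed

lemma normal_scale_mixture_at_bot: "(normal_scale_mixture M g \<longlongrightarrow> 0) at_bot"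
proof -
  have "((\<lambda>z. \<integral>r. Phi ((- z) * g r) \<partial>M) \<longlongrightarrow> (\<integral>r. 0 \<partial>M)) at_top"
  proof (rule integral_dominated_convergence_at_top[where w="\<lambda>_. 1"])
    show "AE r in M. ((\<lambda>z. Phi ((- z) * g r)) \<longlongrightarrow> 0) at_top"
      using g_pos
    proof eventually_elim
      fix r assume "0 < g r"
      then have "LIM z at_top. z * g r :> at_top"
        by (simp add: filterlim_at_top_mult_tendsto_pos[OF tendsto_const] filterlim_ident mult.commute)
      then have "LIM z at_top. (- z) * g r :> at_bot"
        by (simp add: filterlim_uminus_at_bot)
      then show "((\<lambda>z. Phi ((- z) * g r)) \<longlongrightarrow> 0) at_top"
        using filterlim_compose[OF std_normal.cdf_lim_at_bot] by blast
    qed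
  qed auto
  then show ?thesis
    unfolding filterlim_at_bot_mirror by (simp add: normal_scale_mixture_def)
qed

definition mixture_quantile :: "real \<Rightarrow> real" where
  "mixture_quantile a = Inf {z. a \<le> normal_scale_mixture M g z}"

lemma normal_scale_mixture_quantile:
  assumes "0 < a" "a < 1"
  shows "normal_scale_mixture M g (mixture_quantile a) = a"
    and "a \<le> normal_scale_mixture M g z \<longleftrightarrow> mixture_quantile a \<le> z"
  using Inf_superlevel_continuous[OF normal_scale_mixture_mono isCont_normal_scale_mixture
      normal_scale_mixture_at_bot normal_scale_mixture_at_top assms]
  unfolding mixture_quantile_def by auto

end

section \<open>The chain-ladder quantities\<close>

lemma powr_neg_half_eq:
  fixes c e :: real
  assumes "0 < c"
  shows "c powr (- e / 2) = 1 / sqrt (c powr e)"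
proof -
  have "sqrt (c powr e) = c powr (e / 2)"
    using assms by (simp add: powr_half_sqrt[symmetric] powr_powr)
  then show ?thesis
    by (simp add: powr_minus_divide[of c "e / 2", symmetric])
qed

lemma power2_powr_neg_half: "0 < (z::real) \<Longrightarrow> (z powr (- 1 / 2))\<^sup>2 = 1 / z"
  by (simp add: power2_eq_square powr_add[symmetric] powr_minus_divide)

lemma measurable_Zadj_pair:
  "(\<lambda>p. Zadj n C \<gamma> f \<sigma> (fst p) (snd p)) \<in> borel_measurable (std_normal_PiM I \<Otimes>\<^sub>M std_normal_PiM I)"
  unfolding Zadj_def Zhat_def Zmodel_def fsim_def sigsim_def asim_def ww_def fhat_def sighat_def
    Mp_def Rp_def Fobs_def
  by measurable

lemma measurable_Zadj:
  "(\<lambda>\<zeta>'. Zadj n C \<gamma> f \<sigma> \<zeta> \<zeta>') \<in> borel_measurable (std_normal_PiM I)"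
  unfolding Zadj_def Zhat_def Zmodel_def fsim_def sigsim_def asim_def ww_def fhat_def sighat_def
    Mp_def Rp_def Fobs_def
  by measurable

lemma measurable_sum_Ztrue [measurable]:
  "(\<lambda>\<zeta>. \<Sum>i=1..n. Ztrue n C \<gamma> f \<sigma> \<zeta> i) \<in> borel_measurable (std_normal_PiM I)"
  unfolding Ztrue_def by measurable

locale chain_ladder =
  fixes n :: nat and C :: "nat \<Rightarrow> nat \<Rightarrow> real" and \<gamma> :: real and f \<sigma> :: "nat \<Rightarrow> real"
  assumes n_ge_2: "2 \<le> n"
    and C_pos: "\<And>i k. i + k \<le> n \<Longrightarrow> 0 < C i k"
    and \<sigma>_pos: "\<And>k. 1 \<le> k \<Longrightarrow> k \<le> n - 1 \<Longrightarrow> 0 < \<sigma> k"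
    and f_last: "f n = 1" and \<sigma>_last: "\<sigma> n = 0"
begin

lemma diag_index:
  assumes "2 \<le> i" "i \<le> n"
  shows "1 \<le> n - i + 1" "n - i + 1 \<le> n - 1" "n - i + 1 \<le> n" "n - i + 1 \<noteq> n"
    "n - (n - i + 1) = i - 1" "n - i + 1 - 1 = n - i"
  using assms by auto

definition weight :: "nat \<Rightarrow> nat \<Rightarrow> real" where
  "weight k i = C i (k - 1) powr \<gamma>"

definition weight_sum :: "nat \<Rightarrow> real" where
  "weight_sum k = (\<Sum>i=0..n-k. weight k i)"

definition col_proj :: "(nat \<times> nat \<Rightarrow> real) \<Rightarrow> nat \<Rightarrow> real" where
  "col_proj \<zeta> k = (\<Sum>i=0..n-k. sqrt (weight k i) * \<zeta> (i, k)) / sqrt (weight_sum k)"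

definition resid_msq :: "(nat \<times> nat \<Rightarrow> real) \<Rightarrow> nat \<Rightarrow> real" where
  "resid_msq \<eta> k = (if k \<in> {1..n-1} then (\<Sum>i=1..n-k. (\<eta> (i, k))\<^sup>2) / real (n - k) else 0)"

text \<open>Per unit of \<open>\<sigma>\<close>, the standard deviations of the process error and of the estimation error
  in the next payment of accident year \<open>i\<close>.\<close>
definition process_coef :: "nat \<Rightarrow> real" where
  "process_coef i = C i (n - i) * C i (n - i) powr (- \<gamma> / 2)"

definition estimation_coef :: "nat \<Rightarrow> real" where
  "estimation_coef i = C i (n - i) / sqrt (weight_sum (n - i + 1))"

lemma weight_pos:
  assumes "1 \<le> k" "k \<le> n" "i \<le> n - k"
  shows "0 < weight k i"
proof -
  have "0 < C i (k - 1)"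
    using assms by (intro C_pos) linarith
  then show ?thesis by (simp add: weight_def)
qed

lemma weight_sum_pos: "1 \<le> k \<Longrightarrow> k \<le> n \<Longrightarrow> 0 < weight_sum k"
  unfolding weight_sum_def by (rule sum_pos) (auto intro: weight_pos)

lemma Rp_eq_col_proj:
  assumes "1 \<le> k" "k \<le> n"
  shows "Rp n C \<gamma> \<zeta> k = col_proj \<zeta> k / sqrt (weight_sum k)"
proof -
  have "0 < weight_sum k" using weight_sum_pos assms .
  then show ?thesis
    unfolding Rp_def col_proj_def weight_def[symmetric] weight_sum_def[symmetric]
    by (simp add: sum_divide_distrib[symmetric] mult.commute)
qed

lemma Mp_eq_col_proj:
  assumes k: "1 \<le> k" "k \<le> n"
  shows "Mp n C \<gamma> \<zeta> k = ((\<Sum>i=0..n-k. (\<zeta> (i, k))\<^sup>2) - (col_proj \<zeta> k)\<^sup>2) / real (n - k)"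
proof -
  define R where "R = Rp n C \<gamma> \<zeta> k"
  define X where "X = (\<Sum>i=0..n-k. sqrt (weight k i) * \<zeta> (i, k))"
  have S: "0 < weight_sum k" using weight_sum_pos k .
  have "weight k i * (\<zeta> (i, k) / sqrt (weight k i) - R)\<^sup>2
      = (\<zeta> (i, k))\<^sup>2 - 2 * R * (sqrt (weight k i) * \<zeta> (i, k)) + R\<^sup>2 * weight k i"
    if "i \<in> {0..n-k}" for i
  proof -
    have "0 < weight k i" using weight_pos k that by auto
    then show ?thesis
      by (simp add: power2_eq_square field_simps)
  qed
  then have "(\<Sum>i=0..n-k. weight k i * (\<zeta> (i, k) / sqrt (weight k i) - R)\<^sup>2)
     = (\<Sum>i=0..n-k. (\<zeta> (i, k))\<^sup>2) - 2 * R * X + R\<^sup>2 * weight_sum k"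
    by (simp add: sum.distrib sum_subtractf sum_distrib_left weight_sum_def X_def)
  also have "\<dots> = (\<Sum>i=0..n-k. (\<zeta> (i, k))\<^sup>2) - (col_proj \<zeta> k)\<^sup>2"
    using S unfolding R_def Rp_eq_col_proj[OF k] col_proj_def X_def[symmetric]
    by (simp add: power2_eq_square field_simps)
  finally show ?thesis
    unfolding Mp_def weight_def[symmetric] R_def[symmetric] by simp
qed

lemma Mp_nonneg: "0 \<le> Mp n C \<gamma> \<zeta> k"
  unfolding Mp_def by (intro mult_nonneg_nonneg sum_nonneg) auto

lemma fhat_eq_Rp:
  assumes k: "1 \<le> k" "k \<le> n - 1"
  shows "fhat n C \<gamma> f \<sigma> \<zeta> k = f k + \<sigma> k * Rp n C \<gamma> \<zeta> k"
proof -
  have kn: "k \<le> n" "k \<noteq> n" using k n_ge_2 by auto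
  have S: "0 < weight_sum k" using weight_sum_pos k kn by auto
  have "weight k i * Fobs C \<gamma> f \<sigma> \<zeta> i k = f k * weight k i + \<sigma> k * (sqrt (weight k i) * \<zeta> (i, k))"
    if "i \<in> {0..n-k}" for i
  proof -
    have "0 < C i (k - 1)" using C_pos that k by auto
    then have neg_half: "C i (k - 1) powr (- \<gamma> / 2) = 1 / sqrt (weight k i)"
      unfolding weight_def by (rule powr_neg_half_eq)
    have "0 < weight k i" using weight_pos that kn k by auto
    then show ?thesis
      unfolding Fobs_def neg_half by (simp add: field_simps)
  qed
  then have "(\<Sum>i=0..n-k. weight k i * Fobs C \<gamma> f \<sigma> \<zeta> i k)
      = f k * weight_sum k + \<sigma> k * (\<Sum>i=0..n-k. sqrt (weight k i) * \<zeta> (i, k))"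
    by (simp add: sum.distrib sum_distrib_left weight_sum_def)
  then show ?thesis
    using S kn unfolding fhat_def weight_def[symmetric] weight_sum_def[symmetric] Rp_eq_col_proj[OF k(1) kn(1)]
      col_proj_def
    by (simp add: field_simps)
qed

lemma sighat_eq_Mp:
  assumes k: "1 \<le> k" "k \<le> n - 1"
  shows "sighat n C \<gamma> f \<sigma> \<zeta> k = \<sigma> k * sqrt (Mp n C \<gamma> \<zeta> k)"
proof -
  have kn: "k \<noteq> n" using k n_ge_2 by auto
  have "Fobs C \<gamma> f \<sigma> \<zeta> i k - fhat n C \<gamma> f \<sigma> \<zeta> k
      = \<sigma> k * (\<zeta> (i, k) / sqrt (weight k i) - Rp n C \<gamma> \<zeta> k)" if "i \<in> {0..n-k}" for i
  proof -
    have "0 < C i (k - 1)" using C_pos that k by auto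
    then have neg_half: "C i (k - 1) powr (- \<gamma> / 2) = 1 / sqrt (weight k i)"
      unfolding weight_def by (rule powr_neg_half_eq)
    show ?thesis
      unfolding Fobs_def fhat_eq_Rp[OF k] neg_half by (simp add: algebra_simps)
  qed
  then have "(\<Sum>i=0..n-k. C i (k - 1) powr \<gamma> * (Fobs C \<gamma> f \<sigma> \<zeta> i k - fhat n C \<gamma> f \<sigma> \<zeta> k)\<^sup>2)
     = (\<sigma> k)\<^sup>2 * (\<Sum>i=0..n-k. weight k i * (\<zeta> (i, k) / sqrt (weight k i) - Rp n C \<gamma> \<zeta> k)\<^sup>2)"
    unfolding sum_distrib_left weight_def[symmetric]
    by (intro sum.cong) (simp_all add: power_mult_distrib)
  then have "sighat n C \<gamma> f \<sigma> \<zeta> k = sqrt ((\<sigma> k)\<^sup>2 * Mp n C \<gamma> \<zeta> k)"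
    unfolding sighat_def Mp_def weight_def using kn by simp
  also have "\<dots> = \<sigma> k * sqrt (Mp n C \<gamma> \<zeta> k)"
    using \<sigma>_pos[OF k] by (simp add: real_sqrt_mult)
  finally show ?thesis .
qed

lemma sighat_sq: "1 \<le> k \<Longrightarrow> k \<le> n - 1 \<Longrightarrow> (sighat n C \<gamma> f \<sigma> \<zeta> k)\<^sup>2 = (\<sigma> k)\<^sup>2 * Mp n C \<gamma> \<zeta> k"
  by (simp add: sighat_eq_Mp power_mult_distrib Mp_nonneg)

lemma Ztrue_minus_Zhat:
  assumes i: "2 \<le> i" "i \<le> n"
  shows "Ztrue n C \<gamma> f \<sigma> \<zeta> i - Zhat n C \<gamma> f \<sigma> \<zeta> i
      = \<sigma> (n - i + 1) * (process_coef i * \<zeta> (i, n - i + 1) - estimation_coef i * col_proj \<zeta> (n - i + 1))"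
  using diag_index[OF i]
  unfolding Ztrue_def Zhat_def fhat_eq_Rp[OF diag_index(1,2)[OF i]] process_coef_def estimation_coef_def
    Rp_eq_col_proj[OF diag_index(1,3)[OF i]]
  by (simp add: algebra_simps)

lemma sum_Ztrue:
  "(\<Sum>i=1..n. Ztrue n C \<gamma> f \<sigma> \<zeta> i) = (\<Sum>i=1..n. Zhat n C \<gamma> f \<sigma> \<zeta> i)
    + (\<Sum>i=2..n. \<sigma> (n - i + 1) * (process_coef i * \<zeta> (i, n - i + 1) - estimation_coef i * col_proj \<zeta> (n - i + 1)))"
proof -
  have "Ztrue n C \<gamma> f \<sigma> \<zeta> 1 = 0" "Zhat n C \<gamma> f \<sigma> \<zeta> 1 = 0"
    using f_last \<sigma>_last n_ge_2 by (simp_all add: Ztrue_def Zhat_def fhat_def)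
  then have "(\<Sum>i=1..n. Ztrue n C \<gamma> f \<sigma> \<zeta> i - Zhat n C \<gamma> f \<sigma> \<zeta> i)
      = (\<Sum>i=2..n. Ztrue n C \<gamma> f \<sigma> \<zeta> i - Zhat n C \<gamma> f \<sigma> \<zeta> i)"
    using n_ge_2 by (simp add: sum.atLeast_Suc_atMost numeral_2_eq_2)
  also have "\<dots> = (\<Sum>i=2..n. \<sigma> (n - i + 1) * (process_coef i * \<zeta> (i, n - i + 1)
      - estimation_coef i * col_proj \<zeta> (n - i + 1)))"
    by (intro sum.cong) (simp_all add: Ztrue_minus_Zhat)
  finally show ?thesis by (simp add: sum_subtractf)
qed

definition total_var :: "(nat \<Rightarrow> real) \<Rightarrow> real" where
  "total_var m = (\<Sum>i=2..n. (\<sigma> (n - i + 1))\<^sup>2 * vv n C \<gamma> i * m (n - i + 1))"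

text \<open>The correction factor \<open>a_sim\<close> as a function of the residual mean squares \<open>m\<close> of the
  observed and \<open>m'\<close> of the simulated triangle.\<close>
definition adj_factor :: "(nat \<Rightarrow> real) \<Rightarrow> (nat \<Rightarrow> real) \<Rightarrow> real" where
  "adj_factor m m' = ((\<Sum>i=2..n. ((\<sigma> (n - i + 1))\<^sup>2 * m (n - i + 1) * vv n C \<gamma> i
       / (\<Sum>j=2..n. (\<sigma> (n - j + 1))\<^sup>2 * m (n - j + 1) * vv n C \<gamma> j)) / m' (n - i + 1))
     * (\<Sum>i=2..n. ww n C \<gamma> \<sigma> i * m' (n - i + 1))) powr (- 1 / 2)"

lemma asim_eq: "asim n C \<gamma> f \<sigma> \<zeta> \<zeta>' = adj_factor (Mp n C \<gamma> \<zeta>) (Mp n C \<gamma> \<zeta>')"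
proof -
  have "(\<Sum>j=2..n. (sighat n C \<gamma> f \<sigma> \<zeta> (n - j + 1))\<^sup>2 * vv n C \<gamma> j)
      = (\<Sum>j=2..n. (\<sigma> (n - j + 1))\<^sup>2 * Mp n C \<gamma> \<zeta> (n - j + 1) * vv n C \<gamma> j)"
    by (intro sum.cong) (auto simp: sighat_sq diag_index)
  moreover have "(sighat n C \<gamma> f \<sigma> \<zeta> (n - i + 1))\<^sup>2 = (\<sigma> (n - i + 1))\<^sup>2 * Mp n C \<gamma> \<zeta> (n - i + 1)"
    if "i \<in> {2..n}" for i
    using that by (intro sighat_sq diag_index) auto
  ultimately have ww_sighat: "ww n C \<gamma> (sighat n C \<gamma> f \<sigma> \<zeta>) i
      = (\<sigma> (n - i + 1))\<^sup>2 * Mp n C \<gamma> \<zeta> (n - i + 1) * vv n C \<gamma> i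
        / (\<Sum>j=2..n. (\<sigma> (n - j + 1))\<^sup>2 * Mp n C \<gamma> \<zeta> (n - j + 1) * vv n C \<gamma> j)"
    if "i \<in> {2..n}" for i
    using that unfolding ww_def by simp
  show ?thesis
    unfolding asim_def adj_factor_def
    by (rule arg_cong[where f="\<lambda>x. x powr (- 1 / 2)"], rule arg_cong2[where f="(*)"])
       (rule sum.cong, simp_all add: ww_sighat)
qed

lemma Zmodel_minus_Zhat:
  assumes i: "2 \<le> i" "i \<le> n"
  shows "Zmodel n C \<gamma> f \<sigma> \<zeta> \<zeta>' i - Zhat n C \<gamma> f \<sigma> \<zeta> i
      = \<sigma> (n - i + 1) * sqrt (Mp n C \<gamma> \<zeta> (n - i + 1) / Mp n C \<gamma> \<zeta>' (n - i + 1))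
        * (process_coef i * \<zeta>' (i, n - i + 1) - estimation_coef i * col_proj \<zeta>' (n - i + 1))"
proof -
  note ix = diag_index[OF i]
  have "sigsim n C \<gamma> f \<sigma> \<zeta> \<zeta>' (n - i + 1)
      = sqrt ((\<sigma> (n - i + 1))\<^sup>2 * (Mp n C \<gamma> \<zeta> (n - i + 1) / Mp n C \<gamma> \<zeta>' (n - i + 1)))"
    unfolding sigsim_def using ix sighat_sq[OF ix(1,2), of \<zeta>] by simp
  also have "\<dots> = sqrt ((\<sigma> (n - i + 1))\<^sup>2) * sqrt (Mp n C \<gamma> \<zeta> (n - i + 1) / Mp n C \<gamma> \<zeta>' (n - i + 1))"
    by (rule real_sqrt_mult)
  also have "\<dots> = \<sigma> (n - i + 1) * sqrt (Mp n C \<gamma> \<zeta> (n - i + 1) / Mp n C \<gamma> \<zeta>' (n - i + 1))"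
    using \<sigma>_pos[OF ix(1,2)] by simp
  finally show ?thesis
    using ix unfolding Zmodel_def Zhat_def fsim_def process_coef_def estimation_coef_def Rp_eq_col_proj[OF ix(1,3)]
    by (simp add: algebra_simps)
qed

lemma Zadj_eq:
  "Zadj n C \<gamma> f \<sigma> \<zeta> \<zeta>' = (\<Sum>i=1..n. Zhat n C \<gamma> f \<sigma> \<zeta> i)
     + (\<Sum>i=2..n. adj_factor (Mp n C \<gamma> \<zeta>) (Mp n C \<gamma> \<zeta>') * \<sigma> (n - i + 1)
          * sqrt (Mp n C \<gamma> \<zeta> (n - i + 1) / Mp n C \<gamma> \<zeta>' (n - i + 1))
          * (process_coef i * \<zeta>' (i, n - i + 1) - estimation_coef i * col_proj \<zeta>' (n - i + 1)))"
proof -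
  define a where "a = asim n C \<gamma> f \<sigma> \<zeta> \<zeta>'"
  have "Zmodel n C \<gamma> f \<sigma> \<zeta> \<zeta>' 1 = 0" "Zhat n C \<gamma> f \<sigma> \<zeta> 1 = 0"
    using n_ge_2 by (simp_all add: Zmodel_def Zhat_def fhat_def fsim_def sigsim_def)
  then have "(\<Sum>i=1..n. a * (Zmodel n C \<gamma> f \<sigma> \<zeta> \<zeta>' i - Zhat n C \<gamma> f \<sigma> \<zeta> i))
      = (\<Sum>i=2..n. a * (Zmodel n C \<gamma> f \<sigma> \<zeta> \<zeta>' i - Zhat n C \<gamma> f \<sigma> \<zeta> i))"
    using n_ge_2 by (simp add: sum.atLeast_Suc_atMost numeral_2_eq_2)
  moreover have "Zadj n C \<gamma> f \<sigma> \<zeta> \<zeta>' - (\<Sum>i=1..n. Zhat n C \<gamma> f \<sigma> \<zeta> i)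
      = (\<Sum>i=1..n. a * (Zmodel n C \<gamma> f \<sigma> \<zeta> \<zeta>' i - Zhat n C \<gamma> f \<sigma> \<zeta> i))"
    unfolding Zadj_def a_def[symmetric] by (simp add: sum_subtractf[symmetric] algebra_simps)
  ultimately have "Zadj n C \<gamma> f \<sigma> \<zeta> \<zeta>' - (\<Sum>i=1..n. Zhat n C \<gamma> f \<sigma> \<zeta> i)
      = (\<Sum>i=2..n. a * (Zmodel n C \<gamma> f \<sigma> \<zeta> \<zeta>' i - Zhat n C \<gamma> f \<sigma> \<zeta> i))"
    by simp
  also have "\<dots> = (\<Sum>i=2..n. adj_factor (Mp n C \<gamma> \<zeta>) (Mp n C \<gamma> \<zeta>') * \<sigma> (n - i + 1)
          * sqrt (Mp n C \<gamma> \<zeta> (n - i + 1) / Mp n C \<gamma> \<zeta>' (n - i + 1))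
          * (process_coef i * \<zeta>' (i, n - i + 1) - estimation_coef i * col_proj \<zeta>' (n - i + 1)))"
    by (intro sum.cong) (simp_all add: Zmodel_minus_Zhat a_def asim_eq mult.assoc)
  finally show ?thesis by simp
qed


lemma C_diag_pos: "i \<le> n \<Longrightarrow> 0 < C i (n - i)"
  using C_pos[of i "n - i"] by simp

lemma process_coef_pos: "i \<le> n \<Longrightarrow> 0 < process_coef i"
  using C_diag_pos[of i] by (simp add: process_coef_def)

lemma vv_eq:
  assumes i: "2 \<le> i" "i \<le> n"
  shows "vv n C \<gamma> i = (process_coef i)\<^sup>2 + (estimation_coef i)\<^sup>2"
proof -
  have "0 < weight_sum (n - i + 1)"
    using weight_sum_pos diag_index(1,3)[OF i] by simp
  moreover have "weight_sum (n - i + 1) = (\<Sum>l=0..i-1. C l (n - i) powr \<gamma>)"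
    unfolding weight_sum_def weight_def using i by (intro sum.cong) auto
  moreover have "(C i (n - i) powr (- \<gamma> / 2))\<^sup>2 = C i (n - i) powr (- \<gamma>)"
    by (simp add: power2_eq_square powr_add[symmetric])
  ultimately show ?thesis
    unfolding vv_def process_coef_def estimation_coef_def
    by (simp add: power_mult_distrib power_divide algebra_simps)
qed

lemma vv_pos: "2 \<le> i \<Longrightarrow> i \<le> n \<Longrightarrow> 0 < vv n C \<gamma> i"
  using process_coef_pos[of i] by (simp add: vv_eq add_pos_nonneg)

lemma total_var_pos:
  assumes "\<And>k. 1 \<le> k \<Longrightarrow> k \<le> n - 1 \<Longrightarrow> 0 < m k"
  shows "0 < total_var m"
  unfolding total_var_def
proof (rule sum_pos)
  fix i assume "i \<in> {2..n}"
  then have i: "2 \<le> i" "i \<le> n" by auto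
  show "0 < (\<sigma> (n - i + 1))\<^sup>2 * vv n C \<gamma> i * m (n - i + 1)"
    using \<sigma>_pos[OF diag_index(1,2)[OF i]] vv_pos[OF i] assms[OF diag_index(1,2)[OF i]] by simp
qed (use n_ge_2 in auto)

lemma total_var_cong: "(\<And>k. 1 \<le> k \<Longrightarrow> k \<le> n - 1 \<Longrightarrow> m k = m' k) \<Longrightarrow> total_var m = total_var m'"
  unfolding total_var_def by (intro sum.cong) (auto simp: diag_index)

lemma adj_factor_cong:
  "(\<And>k. 1 \<le> k \<Longrightarrow> k \<le> n - 1 \<Longrightarrow> m' k = m'' k) \<Longrightarrow> adj_factor m m' = adj_factor m m''"
  unfolding adj_factor_def
  by (intro arg_cong[where f="\<lambda>x. x powr (- 1 / 2)"] arg_cong2[where f="(*)"] sum.cong refl)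
     (auto simp: diag_index)

definition adj_coef :: "(nat \<Rightarrow> real) \<Rightarrow> (nat \<Rightarrow> real) \<Rightarrow> nat \<Rightarrow> real" where
  "adj_coef m m' i = adj_factor m m' * \<sigma> (n - i + 1) * sqrt (m (n - i + 1) / m' (n - i + 1))"

text \<open>This is what \<open>a_sim\<close> is designed for: normalised by \<open>\<surd>(total_var m \<cdot> total_var 1)\<close>, the
  modelled deviation becomes a standard normal divided by \<open>\<surd>total_var m'\<close>, just as the true one.\<close>
lemma sum_sq_adj_coef:
  assumes m: "\<And>k. 1 \<le> k \<Longrightarrow> k \<le> n - 1 \<Longrightarrow> 0 < m k"
    and m': "\<And>k. 1 \<le> k \<Longrightarrow> k \<le> n - 1 \<Longrightarrow> 0 < m' k"
  shows "0 < adj_factor m m'"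
    and "(\<Sum>i=2..n. (adj_coef m m' i)\<^sup>2 * vv n C \<gamma> i) = total_var m * total_var (\<lambda>_. 1) / total_var m'"
proof -
  define W S1 T' V where "W = total_var m" and "S1 = total_var (\<lambda>_. 1)" and "T' = total_var m'"
    and "V = total_var (\<lambda>k. m k / m' k)"
  have pos: "0 < W" "0 < S1" "0 < T'" "0 < V"
    unfolding W_def S1_def T'_def V_def using m m' by (auto intro!: total_var_pos)
  have "(\<Sum>j=2..n. (\<sigma> (n - j + 1))\<^sup>2 * m (n - j + 1) * vv n C \<gamma> j) = W"
    unfolding W_def total_var_def by (intro sum.cong) (simp_all add: algebra_simps)
  then have X: "(\<Sum>i=2..n. ((\<sigma> (n - i + 1))\<^sup>2 * m (n - i + 1) * vv n C \<gamma> i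
       / (\<Sum>j=2..n. (\<sigma> (n - j + 1))\<^sup>2 * m (n - j + 1) * vv n C \<gamma> j)) / m' (n - i + 1)) = V / W"
    unfolding V_def total_var_def by (simp add: sum_divide_distrib algebra_simps)
  have Y: "(\<Sum>i=2..n. ww n C \<gamma> \<sigma> i * m' (n - i + 1)) = T' / S1"
    unfolding T'_def S1_def total_var_def ww_def sum_divide_distrib by (intro sum.cong) simp_all
  have a: "adj_factor m m' = (V / W * (T' / S1)) powr (- 1 / 2)"
    unfolding adj_factor_def X Y ..
  then show "0 < adj_factor m m'"
    using pos by simp
  have "(\<Sum>i=2..n. (adj_coef m m' i)\<^sup>2 * vv n C \<gamma> i) = (adj_factor m m')\<^sup>2 * V"
    unfolding V_def total_var_def sum_distrib_left adj_coef_def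
  proof (rule sum.cong)
    fix i assume "i \<in> {2..n}"
    then have i: "2 \<le> i" "i \<le> n" by auto
    have "0 \<le> m (n - i + 1) / m' (n - i + 1)"
      using m[OF diag_index(1,2)[OF i]] m'[OF diag_index(1,2)[OF i]] by simp
    then show "(adj_factor m m' * \<sigma> (n - i + 1) * sqrt (m (n - i + 1) / m' (n - i + 1)))\<^sup>2 * vv n C \<gamma> i
        = (adj_factor m m')\<^sup>2 * ((\<sigma> (n - i + 1))\<^sup>2 * vv n C \<gamma> i * (m (n - i + 1) / m' (n - i + 1)))"
      by (simp add: power_mult_distrib)
  qed simp
  also have "\<dots> = W * S1 / T'"
  proof -
    have "(adj_factor m m')\<^sup>2 = 1 / (V / W * (T' / S1))"
      unfolding a using pos by (intro power2_powr_neg_half) simp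
    then show ?thesis using pos by (simp add: field_simps)
  qed
  finally show "(\<Sum>i=2..n. (adj_coef m m' i)\<^sup>2 * vv n C \<gamma> i) = total_var m * total_var (\<lambda>_. 1) / total_var m'"
    by (simp add: W_def S1_def T'_def)
qed

text \<open>After the orthogonal change of coordinates of \<open>exists_column_decomposition\<close> below, \<open>(0, k)\<close> holds
  the projection \<open>col_proj\<close> of column \<open>k\<close> and the \<open>(i, k)\<close> with \<open>i \<ge> 1\<close> its residual part. The
  payments then depend on the coordinates \<open>pay_idx \<subseteq> noise_idx\<close> only, the residual mean squares
  on \<open>resid_idx\<close> only.\<close>
definition resid_idx :: "(nat \<times> nat) set" where
  "resid_idx = {(i, k). 1 \<le> k \<and> k \<le> n - 1 \<and> 1 \<le> i \<and> i \<le> n - k}"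

definition noise_idx :: "(nat \<times> nat) set" where
  "noise_idx = {(i, k). i = 0 \<and> 1 \<le> k \<and> k \<le> n - 1} \<union> {(i, k). 1 \<le> i \<and> i \<le> n \<and> k = n - i + 1}"

definition pay_idx :: "(nat \<times> nat) set" where
  "pay_idx = (\<lambda>i. (i, n - i + 1)) ` {2..n} \<union> (\<lambda>i. (0, n - i + 1)) ` {2..n}"

definition pay_coef :: "(nat \<Rightarrow> real) \<Rightarrow> nat \<times> nat \<Rightarrow> real" where
  "pay_coef c x = (if fst x = 0 then - c (n - snd x + 1) * estimation_coef (n - snd x + 1)
     else c (fst x) * process_coef (fst x))"

lemma sum_pay_idx: "(\<Sum>x\<in>pay_idx. h x) = (\<Sum>i=2..n. h (i, n - i + 1) + h (0, n - i + 1))"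
proof -
  have "inj_on (\<lambda>i. (i, n - i + 1)) {2..n}" "inj_on (\<lambda>i. (0::nat, n - i + 1)) {2..n}"
    by (auto simp: inj_on_def)
  moreover have "(\<lambda>i. (i, n - i + 1)) ` {2..n} \<inter> (\<lambda>i. (0, n - i + 1)) ` {2..n} = {}"
    by auto
  ultimately show ?thesis
    unfolding pay_idx_def by (simp add: sum.union_disjoint sum.reindex sum.distrib)
qed

lemma sum_pay_coef:
  "(\<Sum>x\<in>pay_idx. pay_coef c x * \<eta> x)
     = (\<Sum>i=2..n. c i * (process_coef i * \<eta> (i, n - i + 1) - estimation_coef i * \<eta> (0, n - i + 1)))"
  unfolding sum_pay_idx by (intro sum.cong) (auto simp: pay_coef_def algebra_simps)

lemma sum_sq_pay_coef: "(\<Sum>x\<in>pay_idx. (pay_coef c x)\<^sup>2) = (\<Sum>i=2..n. (c i)\<^sup>2 * vv n C \<gamma> i)"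
  unfolding sum_pay_idx
proof (rule sum.cong)
  fix i assume "i \<in> {2..n}"
  then have i: "2 \<le> i" "i \<le> n" by auto
  then have "n - (n - i + 1) + 1 = i" by auto
  then show "(pay_coef c (i, n - i + 1))\<^sup>2 + (pay_coef c (0, n - i + 1))\<^sup>2 = (c i)\<^sup>2 * vv n C \<gamma> i"
    using i by (simp add: pay_coef_def power_mult_distrib vv_eq algebra_simps)
qed simp

lemma idx_partition: "resid_idx \<inter> noise_idx = {}" "resid_idx \<union> noise_idx = idx n"
  unfolding resid_idx_def noise_idx_def idx_def using n_ge_2 by auto

lemma pay_idx_subset: "pay_idx \<subseteq> noise_idx"
  unfolding pay_idx_def noise_idx_def by auto

lemma diag_2_in_pay_idx: "(2, n - 1) \<in> pay_idx"
  unfolding pay_idx_def using n_ge_2 by (auto intro!: image_eqI[where x=2])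

lemma finite_idx: "finite (idx n)"
proof -
  have "idx n \<subseteq> {0..n} \<times> {0..n+1}" unfolding idx_def by auto
  then show ?thesis using finite_subset by blast
qed

lemma resid_msq_cong: "(\<And>x. x \<in> resid_idx \<Longrightarrow> \<eta> x = \<eta>' x) \<Longrightarrow> resid_msq \<eta> = resid_msq \<eta>'"
  unfolding resid_msq_def resid_idx_def by (intro ext) (auto intro!: sum.cong)

lemma measurable_resid_msq [measurable]: "(\<lambda>\<eta>. resid_msq \<eta> k) \<in> borel_measurable (std_normal_PiM S)"
  unfolding resid_msq_def by measurable

definition positive_on_devs :: "(nat \<Rightarrow> real) \<Rightarrow> bool" where
  "positive_on_devs m \<longleftrightarrow> (\<forall>k\<in>{1..n-1}. 0 < m k)"

lemma AE_positive_resid_msq: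
  assumes "resid_idx \<subseteq> S"
  shows "AE \<eta> in std_normal_PiM S. positive_on_devs (resid_msq \<eta>)"
proof -
  have "AE \<eta> in std_normal_PiM S. \<forall>k\<in>{1..n-1}. \<eta> (1, k) \<noteq> 0"
  proof (rule AE_finite_allI)
    fix k assume "k \<in> {1..n-1}"
    then have "(1, k) \<in> S" using assms unfolding resid_idx_def by auto
    then show "AE \<eta> in std_normal_PiM S. \<eta> (1, k) \<noteq> 0"
      by (rule AE_std_normal_PiM_component_nonzero)
  qed simp
  then show ?thesis
  proof eventually_elim
    fix \<eta> :: "nat \<times> nat \<Rightarrow> real" assume nonzero: "\<forall>k\<in>{1..n-1}. \<eta> (1, k) \<noteq> 0"
    have "0 < resid_msq \<eta> k" if k: "k \<in> {1..n-1}" for k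
    proof -
      have "(\<eta> (1, k))\<^sup>2 \<le> (\<Sum>i=1..n-k. (\<eta> (i, k))\<^sup>2)"
        by (rule member_le_sum) (use k in auto)
      moreover have "0 < (\<eta> (1, k))\<^sup>2" using nonzero k by simp
      ultimately have "0 < (\<Sum>i=1..n-k. (\<eta> (i, k))\<^sup>2)" by linarith
      moreover have "0 < real (n - k)" using k n_ge_2 by auto
      ultimately show ?thesis
        using k by (simp add: resid_msq_def del: of_nat_diff)
    qed
    then show "positive_on_devs (resid_msq \<eta>)"
      by (simp add: positive_on_devs_def)
  qed
qed

lemma exists_column_decomposition:
  "\<exists>\<Psi>. std_normal_preserving (idx n) \<Psi> \<and>
     (\<forall>\<zeta> k. 1 \<le> k \<longrightarrow> k \<le> n - 1 \<longrightarrow> \<Psi> \<zeta> (0, k) = col_proj \<zeta> k) \<and>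
     (\<forall>\<zeta> k. 1 \<le> k \<longrightarrow> k \<le> n - 1 \<longrightarrow> resid_msq (\<Psi> \<zeta>) k = Mp n C \<gamma> \<zeta> k) \<and>
     (\<forall>\<zeta> i. 1 \<le> i \<longrightarrow> i \<le> n \<longrightarrow> \<Psi> \<zeta> (i, n - i + 1) = \<zeta> (i, n - i + 1))"
proof -
  define col where "col k = (\<lambda>i. (i, k)) ` {0..n-k}" for k
  define \<beta> where "\<beta> k x = sqrt (weight k (fst x))" for k and x :: "nat \<times> nat"
  have inj: "inj_on (\<lambda>i. (i, k)) A" for k and A :: "nat set"
    by (auto simp: inj_on_def)
  have "col k \<subseteq> idx n \<and> (0, k) \<in> col k \<and> 0 < \<beta> k (0, k)" if "k \<in> {1..n-1}" for k
    using that weight_pos[of k 0] unfolding col_def idx_def \<beta>_def by auto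
  moreover have "disjoint_family_on col {1..n-1}"
    unfolding disjoint_family_on_def col_def by auto
  ultimately obtain \<Psi> where \<Psi>: "std_normal_preserving (idx n) \<Psi>"
    "\<forall>\<zeta> x. x \<notin> (\<Union>k\<in>{1..n-1}. col k) \<longrightarrow> \<Psi> \<zeta> x = \<zeta> x"
    "\<forall>k\<in>{1..n-1}. rotates_column (col k) (0, k) (\<beta> k) \<Psi>"
    using exists_columns_rotation[OF finite_idx, of "{1..n-1}" col "\<lambda>k. (0, k)" \<beta>] by auto
  have proj: "\<Psi> \<zeta> (0, k) = col_proj \<zeta> k" if k: "1 \<le> k" "k \<le> n - 1" for \<zeta> k
  proof -
    have "0 \<le> weight k i" if "i \<le> n - k" for i
      using weight_pos[of k i] k n_ge_2 that by force
    then have "(\<Sum>i\<in>col k. (\<beta> k i)\<^sup>2) = weight_sum k"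
      unfolding col_def weight_sum_def by (simp add: sum.reindex[OF inj] \<beta>_def)
    moreover have "(\<Sum>i\<in>col k. \<beta> k i * \<zeta> i) = (\<Sum>i=0..n-k. sqrt (weight k i) * \<zeta> (i, k))"
      unfolding col_def by (simp add: sum.reindex[OF inj] \<beta>_def)
    ultimately show ?thesis
      using \<Psi>(3) k unfolding col_proj_def rotates_column_def by auto
  qed
  have "resid_msq (\<Psi> \<zeta>) k = Mp n C \<gamma> \<zeta> k" if k: "1 \<le> k" "k \<le> n - 1" for \<zeta> k
  proof -
    have "(\<Sum>i=0..n-k. (\<Psi> \<zeta> (i, k))\<^sup>2) = (\<Sum>i=0..n-k. (\<zeta> (i, k))\<^sup>2)"
      using \<Psi>(3) k unfolding col_def rotates_column_def by (auto simp: sum.reindex[OF inj])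
    then have "(\<Sum>i=1..n-k. (\<Psi> \<zeta> (i, k))\<^sup>2) = (\<Sum>i=0..n-k. (\<zeta> (i, k))\<^sup>2) - (col_proj \<zeta> k)\<^sup>2"
      using proj[OF k] by (simp add: sum.atLeast_Suc_atMost)
    then show ?thesis
      using k unfolding resid_msq_def Mp_eq_col_proj[OF k(1) order.trans[OF k(2) diff_le_self]] by simp
  qed
  moreover have "\<Psi> \<zeta> (i, n - i + 1) = \<zeta> (i, n - i + 1)" if "1 \<le> i" "i \<le> n" for \<zeta> i
  proof -
    have "(i, n - i + 1) \<notin> (\<Union>k\<in>{1..n-1}. col k)"
      unfolding col_def using that by auto
    then show ?thesis using \<Psi>(2) by blast
  qed
  ultimately show ?thesis
    using \<Psi>(1) proj by blast
qed

definition rotation :: "(nat \<times> nat \<Rightarrow> real) \<Rightarrow> nat \<times> nat \<Rightarrow> real" where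
  "rotation = (SOME \<Psi>. std_normal_preserving (idx n) \<Psi> \<and>
     (\<forall>\<zeta> k. 1 \<le> k \<longrightarrow> k \<le> n - 1 \<longrightarrow> \<Psi> \<zeta> (0, k) = col_proj \<zeta> k) \<and>
     (\<forall>\<zeta> k. 1 \<le> k \<longrightarrow> k \<le> n - 1 \<longrightarrow> resid_msq (\<Psi> \<zeta>) k = Mp n C \<gamma> \<zeta> k) \<and>
     (\<forall>\<zeta> i. 1 \<le> i \<longrightarrow> i \<le> n \<longrightarrow> \<Psi> \<zeta> (i, n - i + 1) = \<zeta> (i, n - i + 1)))"

lemma rotation:
  shows std_normal_preserving_rotation: "std_normal_preserving (idx n) rotation"
    and rotation_col_proj: "\<And>\<zeta> k. 1 \<le> k \<Longrightarrow> k \<le> n - 1 \<Longrightarrow> rotation \<zeta> (0, k) = col_proj \<zeta> k"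
    and resid_msq_rotation: "\<And>\<zeta> k. 1 \<le> k \<Longrightarrow> k \<le> n - 1 \<Longrightarrow> resid_msq (rotation \<zeta>) k = Mp n C \<gamma> \<zeta> k"
    and rotation_diag: "\<And>\<zeta> i. 1 \<le> i \<Longrightarrow> i \<le> n \<Longrightarrow> rotation \<zeta> (i, n - i + 1) = \<zeta> (i, n - i + 1)"
  using someI_ex[OF exists_column_decomposition] unfolding rotation_def by blast+

lemma sum_Ztrue_rotation:
  "(\<Sum>i=1..n. Ztrue n C \<gamma> f \<sigma> \<zeta> i)
    = (\<Sum>i=1..n. Zhat n C \<gamma> f \<sigma> \<zeta> i) + (\<Sum>x\<in>pay_idx. pay_coef (\<lambda>i. \<sigma> (n - i + 1)) x * rotation \<zeta> x)"
  unfolding sum_Ztrue sum_pay_coef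
proof (intro arg_cong2[where f="(+)"] refl sum.cong)
  fix i assume "i \<in> {2..n}"
  then have i: "2 \<le> i" "i \<le> n" "1 \<le> i" by auto
  show "\<sigma> (n - i + 1) * (process_coef i * \<zeta> (i, n - i + 1) - estimation_coef i * col_proj \<zeta> (n - i + 1))
      = \<sigma> (n - i + 1) * (process_coef i * rotation \<zeta> (i, n - i + 1)
          - estimation_coef i * rotation \<zeta> (0, n - i + 1))"
    unfolding rotation_col_proj[OF diag_index(1,2)[OF i(1,2)]] rotation_diag[OF i(3,2)] ..
qed

lemma Zadj_rotation:
  "Zadj n C \<gamma> f \<sigma> \<zeta> \<zeta>' = (\<Sum>i=1..n. Zhat n C \<gamma> f \<sigma> \<zeta> i)
    + (\<Sum>x\<in>pay_idx. pay_coef (adj_coef (Mp n C \<gamma> \<zeta>) (resid_msq (rotation \<zeta>'))) x * rotation \<zeta>' x)"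
  unfolding Zadj_eq sum_pay_coef
proof (intro arg_cong2[where f="(+)"] refl sum.cong)
  fix i assume "i \<in> {2..n}"
  then have i: "2 \<le> i" "i \<le> n" "1 \<le> i" by auto
  have adj: "adj_factor (Mp n C \<gamma> \<zeta>) (resid_msq (rotation \<zeta>')) = adj_factor (Mp n C \<gamma> \<zeta>) (Mp n C \<gamma> \<zeta>')"
    using resid_msq_rotation by (rule adj_factor_cong)
  show "adj_factor (Mp n C \<gamma> \<zeta>) (Mp n C \<gamma> \<zeta>') * \<sigma> (n - i + 1)
        * sqrt (Mp n C \<gamma> \<zeta> (n - i + 1) / Mp n C \<gamma> \<zeta>' (n - i + 1))
        * (process_coef i * \<zeta>' (i, n - i + 1) - estimation_coef i * col_proj \<zeta>' (n - i + 1))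
      = adj_coef (Mp n C \<gamma> \<zeta>) (resid_msq (rotation \<zeta>')) i
        * (process_coef i * rotation \<zeta>' (i, n - i + 1) - estimation_coef i * rotation \<zeta>' (0, n - i + 1))"
    unfolding adj_coef_def adj rotation_col_proj[OF diag_index(1,2)[OF i(1,2)]]
      resid_msq_rotation[OF diag_index(1,2)[OF i(1,2)]] rotation_diag[OF i(3,2)] ..
qed


subsection \<open>The pivot\<close>

abbreviation resid_scale :: "(nat \<times> nat \<Rightarrow> real) \<Rightarrow> real" where
  "resid_scale r \<equiv> sqrt (total_var (resid_msq r))"

abbreviation pivot_cdf :: "real \<Rightarrow> real" where
  "pivot_cdf \<equiv> normal_scale_mixture (std_normal_PiM resid_idx) resid_scale"

abbreviation pivot_quantile :: "real \<Rightarrow> real" where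
  "pivot_quantile \<equiv> mixture_quantile (std_normal_PiM resid_idx) resid_scale"

lemma measurable_total_var_resid_msq [measurable]:
  "(\<lambda>\<eta>. total_var (resid_msq \<eta>)) \<in> borel_measurable (std_normal_PiM S)"
  unfolding total_var_def by measurable

lemma pivot_cdf_quantile:
  assumes "0 < a" "a < 1"
  shows "pivot_cdf (pivot_quantile a) = a" and "a \<le> pivot_cdf z \<longleftrightarrow> pivot_quantile a \<le> z"
proof -
  have pos: "AE r in std_normal_PiM resid_idx. 0 < resid_scale r"
    using AE_positive_resid_msq[OF order_refl]
    by eventually_elim (auto intro!: total_var_pos simp: positive_on_devs_def)
  have meas: "resid_scale \<in> borel_measurable (std_normal_PiM resid_idx)"
    by measurable
  show "pivot_cdf (pivot_quantile a) = a" "a \<le> pivot_cdf z \<longleftrightarrow> pivot_quantile a \<le> z"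
    using normal_scale_mixture_quantile[OF prob_space_std_normal_PiM meas pos assms] by auto
qed

lemma measure_model_pay_le:
  assumes m: "positive_on_devs m"
  shows "measure (std_normal_PiM (idx n))
      {\<eta>\<in>space (std_normal_PiM (idx n)). (\<Sum>x\<in>pay_idx. pay_coef (adj_coef m (resid_msq \<eta>)) x * \<eta> x) \<le> t}
    = pivot_cdf (t / sqrt (total_var m * total_var (\<lambda>_. 1)))"
proof -
  have m_pos: "\<And>k. 1 \<le> k \<Longrightarrow> k \<le> n - 1 \<Longrightarrow> 0 < m k"
    using m by (simp add: positive_on_devs_def)
  have [measurable]: "(\<lambda>\<eta>. pay_coef (adj_coef m (resid_msq \<eta>)) j) \<in> borel_measurable (std_normal_PiM S)"
    for j S unfolding pay_coef_def adj_coef_def adj_factor_def by measurable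
  have "measure (std_normal_PiM (idx n))
      {\<eta>\<in>space (std_normal_PiM (idx n)). (\<Sum>x\<in>pay_idx. pay_coef (adj_coef m (resid_msq \<eta>)) x * \<eta> x) \<le> t}
    = (\<integral>r. Phi (t / sqrt (\<Sum>x\<in>pay_idx. (pay_coef (adj_coef m (resid_msq r)) x)\<^sup>2)) \<partial>std_normal_PiM resid_idx)"
  proof (rule measure_std_normal_PiM_linear_le_conditional[OF finite_idx idx_partition pay_idx_subset diag_2_in_pay_idx])
    show "\<And>\<eta> \<eta>'. \<forall>i\<in>resid_idx. \<eta> i = \<eta>' i \<Longrightarrow>
        pay_coef (adj_coef m (resid_msq \<eta>)) = pay_coef (adj_coef m (resid_msq \<eta>')) \<and> t = t"
      using resid_msq_cong by metis
    show "AE r in std_normal_PiM resid_idx. 0 < pay_coef (adj_coef m (resid_msq r)) (2, n - 1)"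
      using AE_positive_resid_msq[OF order_refl]
    proof eventually_elim
      fix r assume r: "positive_on_devs (resid_msq r)"
      have "n - 2 + 1 = n - 1" "1 \<le> n - 1" using n_ge_2 by auto
      moreover have "0 < adj_factor m (resid_msq r)"
        using m_pos r by (intro sum_sq_adj_coef(1)) (auto simp: positive_on_devs_def)
      ultimately show "0 < pay_coef (adj_coef m (resid_msq r)) (2, n - 1)"
        using m_pos r \<sigma>_pos process_coef_pos n_ge_2
        by (simp add: pay_coef_def adj_coef_def positive_on_devs_def)
    qed
  qed measurable
  also have "\<dots> = (\<integral>r. Phi (t / sqrt (total_var m * total_var (\<lambda>_. 1)) * resid_scale r) \<partial>std_normal_PiM resid_idx)"
  proof (rule integral_cong_AE)
    show "AE r in std_normal_PiM resid_idx.
        Phi (t / sqrt (\<Sum>x\<in>pay_idx. (pay_coef (adj_coef m (resid_msq r)) x)\<^sup>2))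
      = Phi (t / sqrt (total_var m * total_var (\<lambda>_. 1)) * resid_scale r)"
      using AE_positive_resid_msq[OF order_refl]
    proof eventually_elim
      fix r assume "positive_on_devs (resid_msq r)"
      then have r_pos: "\<And>k. 1 \<le> k \<Longrightarrow> k \<le> n - 1 \<Longrightarrow> 0 < resid_msq r k"
        by (simp add: positive_on_devs_def)
      have "(\<Sum>x\<in>pay_idx. (pay_coef (adj_coef m (resid_msq r)) x)\<^sup>2)
          = total_var m * total_var (\<lambda>_. 1) / total_var (resid_msq r)"
        unfolding sum_sq_pay_coef by (rule sum_sq_adj_coef(2)[OF m_pos r_pos])
      moreover have "0 < total_var m" "0 < total_var (resid_msq r)" "0 < total_var (\<lambda>_. 1)"
        using m_pos r_pos by (auto intro!: total_var_pos)
      ultimately show "Phi (t / sqrt (\<Sum>x\<in>pay_idx. (pay_coef (adj_coef m (resid_msq r)) x)\<^sup>2))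
          = Phi (t / sqrt (total_var m * total_var (\<lambda>_. 1)) * resid_scale r)"
        by (simp add: real_sqrt_divide)
    qed
  qed measurable
  finally show ?thesis
    by (simp add: normal_scale_mixture_def)
qed

lemma measure_true_pay_le_studentized:
  "measure (std_normal_PiM (idx n))
      {\<eta>\<in>space (std_normal_PiM (idx n)). (\<Sum>x\<in>pay_idx. pay_coef (\<lambda>i. \<sigma> (n - i + 1)) x * \<eta> x)
         \<le> c * sqrt (total_var (resid_msq \<eta>) * total_var (\<lambda>_. 1))}
    = pivot_cdf c"
proof -
  have norm: "(\<Sum>x\<in>pay_idx. (pay_coef (\<lambda>i. \<sigma> (n - i + 1)) x)\<^sup>2) = total_var (\<lambda>_. 1)"
    unfolding sum_sq_pay_coef total_var_def by (simp add: algebra_simps)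
  have "measure (std_normal_PiM (idx n))
      {\<eta>\<in>space (std_normal_PiM (idx n)). (\<Sum>x\<in>pay_idx. pay_coef (\<lambda>i. \<sigma> (n - i + 1)) x * \<eta> x)
         \<le> c * sqrt (total_var (resid_msq \<eta>) * total_var (\<lambda>_. 1))}
    = (\<integral>r. Phi (c * sqrt (total_var (resid_msq r) * total_var (\<lambda>_. 1))
         / sqrt (\<Sum>x\<in>pay_idx. (pay_coef (\<lambda>i. \<sigma> (n - i + 1)) x)\<^sup>2)) \<partial>std_normal_PiM resid_idx)"
  proof (rule measure_std_normal_PiM_linear_le_conditional[OF finite_idx idx_partition pay_idx_subset diag_2_in_pay_idx])
    show "\<And>\<eta> \<eta>'. \<forall>i\<in>resid_idx. \<eta> i = \<eta>' i \<Longrightarrow> pay_coef (\<lambda>i. \<sigma> (n - i + 1)) = pay_coef (\<lambda>i. \<sigma> (n - i + 1))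
        \<and> c * sqrt (total_var (resid_msq \<eta>) * total_var (\<lambda>_. 1))
        = c * sqrt (total_var (resid_msq \<eta>') * total_var (\<lambda>_. 1))"
      using resid_msq_cong by metis
    have "n - 2 + 1 = n - 1" "1 \<le> n - 1" using n_ge_2 by auto
    then show "AE r in std_normal_PiM resid_idx. 0 < pay_coef (\<lambda>i. \<sigma> (n - i + 1)) (2, n - 1)"
      using \<sigma>_pos process_coef_pos n_ge_2 by (simp add: pay_coef_def)
  qed measurable
  also have "\<dots> = pivot_cdf c"
    unfolding norm normal_scale_mixture_def
    using total_var_pos[of "\<lambda>_. 1"] by (simp add: real_sqrt_mult)
  finally show ?thesis .
qed


lemma measure_Zadj_le:
  assumes pos: "positive_on_devs (Mp n C \<gamma> \<zeta>)"
  shows "measure (resid_space n) {\<zeta>'\<in>space (resid_space n). Zadj n C \<gamma> f \<sigma> \<zeta> \<zeta>' \<le> x}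
       = pivot_cdf ((x - (\<Sum>i=1..n. Zhat n C \<gamma> f \<sigma> \<zeta> i)) / sqrt (total_var (Mp n C \<gamma> \<zeta>) * total_var (\<lambda>_. 1)))"
proof -
  let ?M = "std_normal_PiM (idx n)"
  define Q where "Q \<eta> \<longleftrightarrow> (\<Sum>x\<in>pay_idx. pay_coef (adj_coef (Mp n C \<gamma> \<zeta>) (resid_msq \<eta>)) x * \<eta> x)
      \<le> x - (\<Sum>i=1..n. Zhat n C \<gamma> f \<sigma> \<zeta> i)" for \<eta>
  have [measurable]: "(\<lambda>\<eta>. pay_coef (adj_coef (Mp n C \<gamma> \<zeta>) (resid_msq \<eta>)) j) \<in> borel_measurable ?M" for j
    unfolding pay_coef_def adj_coef_def adj_factor_def by measurable
  have Q: "{\<eta>\<in>space ?M. Q \<eta>} \<in> sets ?M"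
    unfolding Q_def by measurable
  have "measure (resid_space n) {\<zeta>'\<in>space (resid_space n). Zadj n C \<gamma> f \<sigma> \<zeta> \<zeta>' \<le> x}
      = measure ?M {\<zeta>'\<in>space ?M. Q (rotation \<zeta>')}"
    unfolding resid_space_def Q_def Zadj_rotation by (simp add: algebra_simps)
  also have "\<dots> = measure ?M {\<eta>\<in>space ?M. Q \<eta>}"
    by (rule std_normal_preserving_measure(2)[OF std_normal_preserving_rotation Q])
  also have "\<dots> = pivot_cdf ((x - (\<Sum>i=1..n. Zhat n C \<gamma> f \<sigma> \<zeta> i))
      / sqrt (total_var (Mp n C \<gamma> \<zeta>) * total_var (\<lambda>_. 1)))"
    unfolding Q_def using pos by (rule measure_model_pay_le)
  finally show ?thesis .
qed

lemma SCR_eq: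
  assumes a: "0 < \<alpha>" "\<alpha> < 1" and pos: "positive_on_devs (Mp n C \<gamma> \<zeta>)"
  shows "SCR n C \<gamma> f \<sigma> \<alpha> \<zeta> = (\<Sum>i=1..n. Zhat n C \<gamma> f \<sigma> \<zeta> i)
      + pivot_quantile \<alpha> * sqrt (total_var (Mp n C \<gamma> \<zeta>) * total_var (\<lambda>_. 1))"
proof -
  define Zh where "Zh = (\<Sum>i=1..n. Zhat n C \<gamma> f \<sigma> \<zeta> i)"
  define s where "s = sqrt (total_var (Mp n C \<gamma> \<zeta>) * total_var (\<lambda>_. 1))"
  have "0 < total_var (Mp n C \<gamma> \<zeta>)" "0 < total_var (\<lambda>_. 1)"
    using pos by (auto intro!: total_var_pos simp: positive_on_devs_def)
  then have "0 < s"
    unfolding s_def by simp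
  then have "\<alpha> \<le> pivot_cdf ((x - Zh) / s) \<longleftrightarrow> Zh + pivot_quantile \<alpha> * s \<le> x" for x
    using pivot_cdf_quantile(2)[OF a] by (simp add: pos_le_divide_eq algebra_simps)
  then have "{x. \<alpha> \<le> measure (resid_space n) {\<zeta>'\<in>space (resid_space n). Zadj n C \<gamma> f \<sigma> \<zeta> \<zeta>' \<le> x}}
      = {Zh + pivot_quantile \<alpha> * s..}"
    using measure_Zadj_le[OF pos] by (auto simp: Zh_def s_def)
  then show ?thesis
    unfolding SCR_def quantile_def by (simp add: Zh_def s_def)
qed

lemma SCR_measurable:
  assumes a: "0 < \<alpha>" "\<alpha> < 1"
  shows "SCR n C \<gamma> f \<sigma> \<alpha> \<in> borel_measurable (resid_space n)"
proof (rule borel_measurableI_le)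
  fix t
  let ?M = "std_normal_PiM (idx n)"
  define Q where "Q = {p\<in>space (?M \<Otimes>\<^sub>M ?M). Zadj n C \<gamma> f \<sigma> (fst p) (snd p) \<le> t}"
  have "Q \<in> sets (?M \<Otimes>\<^sub>M ?M)"
    unfolding Q_def using measurable_Zadj_pair by measurable
  then have "(\<lambda>\<zeta>. emeasure ?M (Pair \<zeta> -` Q)) \<in> borel_measurable ?M"
    by (rule std_normal_PiM.measurable_emeasure_Pair)
  moreover have "Pair \<zeta> -` Q = {\<zeta>'\<in>space ?M. Zadj n C \<gamma> f \<sigma> \<zeta> \<zeta>' \<le> t}" if "\<zeta> \<in> space ?M" for \<zeta>
    using that unfolding Q_def by (auto simp: space_pair_measure)
  ultimately have [measurable]:
      "(\<lambda>\<zeta>. measure ?M {\<zeta>'\<in>space ?M. Zadj n C \<gamma> f \<sigma> \<zeta> \<zeta>' \<le> t}) \<in> borel_measurable ?M"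
    by (subst measurable_cong[where g="\<lambda>\<zeta>. enn2real (emeasure ?M (Pair \<zeta> -` Q))"])
       (auto simp: measure_def)
  have "{\<zeta>\<in>space ?M. SCR n C \<gamma> f \<sigma> \<alpha> \<zeta> \<le> t}
      = {\<zeta>\<in>space ?M. \<alpha> \<le> measure ?M {\<zeta>'\<in>space ?M. Zadj n C \<gamma> f \<sigma> \<zeta> \<zeta>' \<le> t}}"
    unfolding SCR_def resid_space_def
    using quantile_le_iff[OF prob_space_std_normal_PiM measurable_Zadj a] by simp
  then show "{\<zeta>\<in>space (resid_space n). SCR n C \<gamma> f \<sigma> \<alpha> \<zeta> \<le> t} \<in> sets (resid_space n)"
    unfolding resid_space_def by simp
qed

lemma measure_sum_Ztrue_le_SCR:
  assumes a: "0 < \<alpha>" "\<alpha> < 1"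
  shows "measure (resid_space n)
      {\<zeta>\<in>space (resid_space n). (\<Sum>i=1..n. Ztrue n C \<gamma> f \<sigma> \<zeta> i) \<le> SCR n C \<gamma> f \<sigma> \<alpha> \<zeta>} = \<alpha>"
proof -
  let ?M = "std_normal_PiM (idx n)"
  define Q where "Q \<eta> \<longleftrightarrow> (\<Sum>x\<in>pay_idx. pay_coef (\<lambda>i. \<sigma> (n - i + 1)) x * \<eta> x)
      \<le> pivot_quantile \<alpha> * sqrt (total_var (resid_msq \<eta>) * total_var (\<lambda>_. 1))" for \<eta>
  have Q: "{\<eta>\<in>space ?M. Q \<eta>} \<in> sets ?M"
    unfolding Q_def by measurable
  note SCR_measurable[OF a, unfolded resid_space_def, measurable]
  have E: "{\<zeta>\<in>space ?M. (\<Sum>i=1..n. Ztrue n C \<gamma> f \<sigma> \<zeta> i) \<le> SCR n C \<gamma> f \<sigma> \<alpha> \<zeta>} \<in> sets ?M"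
    by measurable
  have "AE \<eta> in ?M. positive_on_devs (resid_msq \<eta>)"
    using idx_partition(2) by (intro AE_positive_resid_msq) blast
  moreover have "{\<eta>\<in>space ?M. positive_on_devs (resid_msq \<eta>)} \<in> sets ?M"
    unfolding positive_on_devs_def by measurable
  ultimately have "AE \<zeta> in ?M. positive_on_devs (resid_msq (rotation \<zeta>))"
    by (intro std_normal_preserving_AE[OF std_normal_preserving_rotation])
  then have "AE \<zeta> in ?M. \<zeta> \<in> {\<zeta>\<in>space ?M. (\<Sum>i=1..n. Ztrue n C \<gamma> f \<sigma> \<zeta> i) \<le> SCR n C \<gamma> f \<sigma> \<alpha> \<zeta>}
      \<longleftrightarrow> \<zeta> \<in> {\<zeta>\<in>space ?M. Q (rotation \<zeta>)}"
  proof eventually_elim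
    fix \<zeta> assume "positive_on_devs (resid_msq (rotation \<zeta>))"
    then have "positive_on_devs (Mp n C \<gamma> \<zeta>)"
      using resid_msq_rotation by (simp add: positive_on_devs_def)
    moreover have "total_var (Mp n C \<gamma> \<zeta>) = total_var (resid_msq (rotation \<zeta>))"
      using resid_msq_rotation by (intro total_var_cong) simp
    ultimately show "\<zeta> \<in> {\<zeta>\<in>space ?M. (\<Sum>i=1..n. Ztrue n C \<gamma> f \<sigma> \<zeta> i) \<le> SCR n C \<gamma> f \<sigma> \<alpha> \<zeta>}
        \<longleftrightarrow> \<zeta> \<in> {\<zeta>\<in>space ?M. Q (rotation \<zeta>)}"
      unfolding sum_Ztrue_rotation by (simp add: SCR_eq[OF a] Q_def)
  qed
  then have "measure ?M {\<zeta>\<in>space ?M. (\<Sum>i=1..n. Ztrue n C \<gamma> f \<sigma> \<zeta> i) \<le> SCR n C \<gamma> f \<sigma> \<alpha> \<zeta>}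
      = measure ?M {\<zeta>\<in>space ?M. Q (rotation \<zeta>)}"
    using E std_normal_preserving_measure(1)[OF std_normal_preserving_rotation Q] by (rule measure_eq_AE)
  also have "\<dots> = measure ?M {\<eta>\<in>space ?M. Q \<eta>}"
    by (rule std_normal_preserving_measure(2)[OF std_normal_preserving_rotation Q])
  also have "\<dots> = \<alpha>"
    unfolding Q_def measure_true_pay_le_studentized using pivot_cdf_quantile(1)[OF a] .
  finally show ?thesis
    unfolding resid_space_def .
qed

end

theorem theorem4p3:
  fixes n :: nat and \<gamma> \<alpha> :: real and C :: "nat \<Rightarrow> nat \<Rightarrow> real" and f \<sigma> :: "nat \<Rightarrow> real"
  assumes "n \<ge> 2" and "\<gamma> \<in> {0, 1}" and "0 < \<alpha>" and "\<alpha> < 1"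
    and "\<And>i k. i + k \<le> n \<Longrightarrow> C i k > 0"
    and "\<And>k. 1 \<le> k \<Longrightarrow> k \<le> n - 1 \<Longrightarrow> f k > 0"
    and "\<And>k. 1 \<le> k \<Longrightarrow> k \<le> n - 1 \<Longrightarrow> \<sigma> k > 0"
    and "f n = 1" and "\<sigma> n = 0"
  shows "measure (resid_space n)
           {\<zeta> \<in> space (resid_space n).
              (\<Sum>i=1..n. Ztrue n C \<gamma> f \<sigma> \<zeta> i) \<le> SCR n C \<gamma> f \<sigma> \<alpha> \<zeta>} = \<alpha>"
proof -
  interpret chain_ladder n C \<gamma> f \<sigma>
    using assms by unfold_locales auto
  show ?thesis
    using measure_sum_Ztrue_le_SCR[OF assms(3,4)] .
qed

end
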